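(* Let $(\Omega,\mathcal{F},\mathbb{P})$ be a complete probability space, $t_0<T$, $x_0$ a random variable and $a$ a stochastic process on $[t_0,T]$, and let $x(t,\omega)=x_0(\omega)\mathrm{e}^{\int_{t_0}^t a(s,\omega)\mathrm{d} s}$. Assume: (H1) $a\in \mathrm{L}^2([t_0,T]\times\Omega)$; (H2) for every $N\ge1$, $x_0$ and $(\xi_1,\ldots,\xi_N)$ are absolutely continuous and independent; (H3) the density $f_0$ of $x_0$ is continuous and bounded on $D(x_0)$; (H4) there is a constant $C$ with $\|\mathrm{e}^{-K_a(t,\pmb{\xi}_N)}\|_{\mathrm{L}^2(\Omega)}\le C$ for all $N\ge1$ and $t\in[t_0,T]$. Then for all $x\in\mathbb{R}$ and $t\in[t_0,T]$, the sequence \[ f_1^N(x,t)=\int_{\mathbb{R}^N} f_0\big(x\,\mathrm{e}^{-K_a(t,\pmb{\xi}_N)}\big)f_{\pmb{\xi}_N}(\pmb{\xi}_N)\,\mathrm{e}^{-K_a(t,\pmb{\xi}_N)}\,\mathrm{d}\pmb{\xi}_N \] converges to $f_1(x,t)$, where $f_1(\cdot,t)$ is a probability density of $x(t,\cdot)$.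
   Context: Karhunen–Loève expansion: for $a\in \mathrm{L}^2([t_0,T]\times\Omega)$ write $a(t,\omega)=\mu_a(t)+\sum_{j=1}^\infty\sqrt{\nu_j}\,\phi_j(t)\xi_j(\omega)$ (convergence in $\mathrm{L}^2([t_0,T]\times\Omega)$), where $\mu_a(t)=\mathbb{E}[a(t)]$, $\{(\nu_j,\phi_j)\}$ are the (nonnegative) eigenvalue/eigenfunction pairs of the covariance operator $\mathcal{C}f(t)=\int_{t_0}^T\mathrm{Cov}[a(t),a(s)]f(s)\,\mathrm{d} s$ on $\mathrm{L}^2([t_0,T])$ with $\{\phi_j\}$ an orthonormal basis, and $\xi_j$ are zero-mean, unit-variance, pairwise uncorrelated random variables; pairs may be enumerated in any order, and if only finitely many eigenvalues are nonzero, vectors stop at that number. $\pmb{\xi}_N=(\xi_1,\ldots,\xi_N)$, $f_{\pmb{\xi}_N}$ its density, $K_a(t,\pmb{\xi}_N)=\int_{t_0}^t\big(\mu_a(s)+\sum_{j=1}^N\sqrt{\nu_j}\phi_j(s)\xi_j\big)\mathrm{d} s$. $D(x_0)=(0,\infty)$ if $x_0>0$ a.s., $D(x_0)=(-\infty,0)$ if $x_0<0$ a.s., and $D(x_0)=\mathbb{R}$ otherwise. *)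

theory Defs
  imports "HOL-Probability.Probability"
begin

definition sqint :: "'a measure \<Rightarrow> ('a \<Rightarrow> real) \<Rightarrow> bool" where
  "sqint N f \<longleftrightarrow> f \<in> borel_measurable N \<and> integrable N (\<lambda>x. (f x)^2)"

definition Tm :: "real \<Rightarrow> real \<Rightarrow> real measure" where
  "Tm t0 T = restrict_space lborel {t0..T}"

definition mean_fun :: "'a measure \<Rightarrow> (real \<Rightarrow> 'a \<Rightarrow> real) \<Rightarrow> real \<Rightarrow> real" where
  "mean_fun M a t = integral\<^sup>L M (a t)"

definition cov_fun :: "'a measure \<Rightarrow> (real \<Rightarrow> 'a \<Rightarrow> real) \<Rightarrow> real \<Rightarrow> real \<Rightarrow> real" where
  "cov_fun M a t s = integral\<^sup>L M (\<lambda>\<omega>. a t \<omega> * a s \<omega>) - mean_fun M a t * mean_fun M a s"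

definition cov_op :: "'a measure \<Rightarrow> (real \<Rightarrow> 'a \<Rightarrow> real) \<Rightarrow> real \<Rightarrow> real \<Rightarrow> (real \<Rightarrow> real) \<Rightarrow> real \<Rightarrow> real" where
  "cov_op M a t0 T f t = (LINT s:{t0..T}|lborel. cov_fun M a t s * f s)"

definition Dset :: "'a measure \<Rightarrow> ('a \<Rightarrow> real) \<Rightarrow> real set" where
  "Dset M x0 = (if (AE \<omega> in M. 0 < x0 \<omega>) then {0<..}
                else if (AE \<omega> in M. x0 \<omega> < 0) then {..<0} else UNIV)"

text \<open>R^N, realised as the product of N copies of Lebesgue measure indexed by {0..<N}
  (extensional functions nat => real).\<close>
definition RN :: "nat \<Rightarrow> (nat \<Rightarrow> real) measure" where
  "RN N = PiM {..<N} (\<lambda>_. lborel)"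

text \<open>The random vector xi_N = (xi_0, ..., xi_{N-1}) (0-based indexing).\<close>
definition xivec :: "(nat \<Rightarrow> 'a \<Rightarrow> real) \<Rightarrow> nat \<Rightarrow> 'a \<Rightarrow> (nat \<Rightarrow> real)" where
  "xivec \<xi> N \<omega> = restrict (\<lambda>j. \<xi> j \<omega>) {..<N}"

definition Ka :: "(real \<Rightarrow> real) \<Rightarrow> (nat \<Rightarrow> real) \<Rightarrow> (nat \<Rightarrow> real \<Rightarrow> real) \<Rightarrow> real \<Rightarrow> nat
                   \<Rightarrow> real \<Rightarrow> (nat \<Rightarrow> real) \<Rightarrow> real" where
  "Ka mu \<nu> \<phi> t0 N t v = (LINT s:{t0..t}|lborel. mu s + (\<Sum>j<N. sqrt (\<nu> j) * \<phi> j s * v j))"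

definition f1N :: "(real \<Rightarrow> real) \<Rightarrow> ((nat \<Rightarrow> real) \<Rightarrow> real) \<Rightarrow> (real \<Rightarrow> real) \<Rightarrow> (nat \<Rightarrow> real)
                   \<Rightarrow> (nat \<Rightarrow> real \<Rightarrow> real) \<Rightarrow> real \<Rightarrow> nat \<Rightarrow> real \<Rightarrow> real \<Rightarrow> real" where
  "f1N f0 fxi mu \<nu> \<phi> t0 N x t =
     integral\<^sup>L (RN N) (\<lambda>v. f0 (x * exp (- Ka mu \<nu> \<phi> t0 N t v)) * fxi v * exp (- Ka mu \<nu> \<phi> t0 N t v))"

text \<open>Truncation index: the vectors stop at L when only L eigenvalues are nonzero.\<close>
definition trunc_idx :: "enat \<Rightarrow> nat \<Rightarrow> nat" where
  "trunc_idx L n = (case L of enat m \<Rightarrow> min (Suc n) m | \<infinity> \<Rightarrow> Suc n)"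

end

theory Submission
  imports Defs
begin

(* Write K(t) for the integral of a over [t0,t] and K_N(t) for the same integral of the truncated
   Karhunen-Loeve expansion. Transporting the integral defining f_1^N along the law of xi_N gives
   f_1^N(x,t) = E[g_x(K_N(t))] with g_x(k) = f0(x e^-k) e^-k. By Cauchy-Schwarz in time, K_N(t) -> K(t)
   in L^2; g_x is continuous and bounded by B e^-k, and (H4) bounds e^-K_N uniformly in L^2, so
   along almost everywhere convergent subsequences the integrals E[g_x(K_N(t))] converge to
   f_1(x,t) := E[g_x(K(t))]. Finally K(t) agrees almost everywhere with a function of the modes xi,
   hence is independent of x0 by (H2); conditioning on it shows that f_1(.,t) is a density of
   x0 e^K(t). *)

section \<open>Expectations of functions of \<open>L\<^sup>2\<close>-convergent sequences\<close>

lemma abs_le_one_plus_square: "\<bar>y::real\<bar> \<le> 1 + y\<^sup>2"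
proof (cases "\<bar>y\<bar> \<le> 1")
  case False
  then have "\<bar>y\<bar> * 1 \<le> \<bar>y\<bar> * \<bar>y\<bar>" by (intro mult_left_mono) auto
  then show ?thesis by (simp add: power2_eq_square abs_mult_self_eq)
qed (smt (verit) zero_le_power2)

lemma abs_le_min_plus_square_div:
  fixes h R :: real assumes "R > 0"
  shows "\<bar>h\<bar> \<le> min \<bar>h\<bar> R + h\<^sup>2 / R"
proof (cases "\<bar>h\<bar> \<le> R")
  case False
  then have "\<bar>h\<bar> * R \<le> \<bar>h\<bar> * \<bar>h\<bar>" by (intro mult_left_mono) auto
  then have "\<bar>h\<bar> \<le> h\<^sup>2 / R" using assms by (simp add: field_simps power2_eq_square abs_mult_self_eq)
  then show ?thesis using False assms by (simp add: min_def)
qed (use assms in \<open>simp add: min_def\<close>)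

lemma LIMSEQ_if_subseqs_have_LIMSEQ_subseqs:
  fixes x :: "nat \<Rightarrow> real"
  assumes "\<And>s::nat\<Rightarrow>nat. strict_mono s \<Longrightarrow> \<exists>r::nat\<Rightarrow>nat. strict_mono r \<and> (\<lambda>n. x (s (r n))) \<longlonglongrightarrow> l"
  shows "x \<longlonglongrightarrow> l"
proof (rule ccontr)
  assume "\<not> x \<longlonglongrightarrow> l"
  then obtain e where e: "e > 0" and often: "\<forall>n0. \<exists>n\<ge>n0. \<not> dist (x n) l < e"
    unfolding LIMSEQ_def by (auto simp: not_less)
  have "infinite {n. \<not> dist (x n) l < e}"
    unfolding infinite_nat_iff_unbounded_le using often by blast
  from infinite_enumerate[OF this] obtain s :: "nat \<Rightarrow> nat"
    where s: "strict_mono s" "\<And>n. \<not> dist (x (s n)) l < e"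
    by auto
  from assms[OF s(1)] obtain r where "(\<lambda>n. x (s (r n))) \<longlonglongrightarrow> l" by blast
  then obtain n where "dist (x (s (r n))) l < e" using e unfolding LIMSEQ_def by auto
  with s(2) show False by blast
qed

lemma (in finite_measure) square_integral_le_measure_times_integral_square:
  fixes f :: "'a \<Rightarrow> real"
  assumes [measurable]: "f \<in> borel_measurable M" and sq: "integrable M (\<lambda>x. (f x)\<^sup>2)"
  shows "(\<integral>x. f x \<partial>M)\<^sup>2 \<le> measure M (space M) * (\<integral>x. (f x)\<^sup>2 \<partial>M)"
proof (cases "measure M (space M) = 0")
  case True
  then have "AE x in M. False"
    by (intro AE_I'[of "space M"]) (auto simp: null_sets_def emeasure_eq_measure)
  then show ?thesis by (subst integral_eq_zero_AE) auto
next
  case False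
  define m where "m = measure M (space M)"
  define c where "c = (\<integral>x. f x \<partial>M) / m"
  have m: "m > 0" using False measure_nonneg[of M "space M"] unfolding m_def by linarith
  have f: "integrable M f" by (rule square_integrable_imp_integrable[OF _ sq]) simp
  \<comment> \<open>expand \<open>0 \<le> \<integral>(f - c)\<^sup>2\<close> with \<open>c\<close> the mean value of \<open>f\<close>\<close>
  have "0 \<le> (\<integral>x. (f x - c)\<^sup>2 \<partial>M)" by simp
  also have "\<dots> = (\<integral>x. (f x)\<^sup>2 \<partial>M) - 2 * c * (\<integral>x. f x \<partial>M) + c\<^sup>2 * m"
    using f sq by (simp add: power2_diff m_def)
  finally show ?thesis
    using m by (simp add: c_def m_def[symmetric] power2_eq_square field_simps)
qed

lemma (in finite_measure) integral_min_abs_tendsto_zero: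
  fixes h :: "nat \<Rightarrow> 'a \<Rightarrow> real"
  assumes [measurable]: "\<And>n. h n \<in> borel_measurable M"
    and lim: "AE \<omega> in M. (\<lambda>n. h n \<omega>) \<longlonglongrightarrow> 0" and R: "0 \<le> R"
  shows "(\<lambda>n. \<integral>\<omega>. min \<bar>h n \<omega>\<bar> R \<partial>M) \<longlonglongrightarrow> 0"
proof -
  have "(\<lambda>n. \<integral>\<omega>. min \<bar>h n \<omega>\<bar> R \<partial>M) \<longlonglongrightarrow> (\<integral>\<omega>. 0 \<partial>M)"
  proof (rule integral_dominated_convergence[where w="\<lambda>_. R"])
    show "AE \<omega> in M. (\<lambda>n. min \<bar>h n \<omega>\<bar> R) \<longlonglongrightarrow> 0"
      using lim
    proof eventually_elim
      case (elim \<omega>)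
      then have "(\<lambda>n. min \<bar>h n \<omega>\<bar> R) \<longlonglongrightarrow> min \<bar>0\<bar> R" by (intro tendsto_intros)
      then show ?case using R by simp
    qed
  qed (use R in auto)
  then show ?thesis by simp
qed

lemma (in finite_measure) integral_abs_tendsto_zero_if_square_bounded:
  fixes h :: "nat \<Rightarrow> 'a \<Rightarrow> real"
  assumes [measurable]: "\<And>n. h n \<in> borel_measurable M"
    and lim: "AE \<omega> in M. (\<lambda>n. h n \<omega>) \<longlonglongrightarrow> 0"
    and sq: "\<And>n. integrable M (\<lambda>\<omega>. (h n \<omega>)\<^sup>2)" and bd: "\<And>n. (\<integral>\<omega>. (h n \<omega>)\<^sup>2 \<partial>M) \<le> D"
  shows "(\<lambda>n. \<integral>\<omega>. \<bar>h n \<omega>\<bar> \<partial>M) \<longlonglongrightarrow> 0"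
proof (rule LIMSEQ_I)
  fix e :: real assume e: "0 < e"
  have "0 \<le> (\<integral>\<omega>. (h 0 \<omega>)\<^sup>2 \<partial>M)" by simp
  then have D: "0 \<le> D" using bd[of 0] by linarith
  \<comment> \<open>truncate at height \<open>R\<close>: the part above \<open>R\<close> costs at most \<open>D / R\<close>\<close>
  define R where "R = 2 * D / e + 1"
  have R: "R > 0" using D e by (simp add: R_def add_nonneg_pos)
  have small: "D / R < e / 2"
    using e D by (simp add: R_def field_simps)
  have min_int: "integrable M (\<lambda>\<omega>. min \<bar>h n \<omega>\<bar> R)" for n
    by (rule Bochner_Integration.integrable_bound[where f="\<lambda>_. R"]) (use R in auto)
  obtain n0 where n0: "\<And>n. n \<ge> n0 \<Longrightarrow> (\<integral>\<omega>. min \<bar>h n \<omega>\<bar> R \<partial>M) < e / 2"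
    using LIMSEQ_D[OF integral_min_abs_tendsto_zero[OF _ lim], of R "e / 2"] R e by fastforce
  have "(\<integral>\<omega>. \<bar>h n \<omega>\<bar> \<partial>M) < e" if n: "n \<ge> n0" for n
  proof -
    have "integrable M (h n)"
      by (rule square_integrable_imp_integrable[OF _ sq]) simp
    then have "(\<integral>\<omega>. \<bar>h n \<omega>\<bar> \<partial>M) \<le> (\<integral>\<omega>. min \<bar>h n \<omega>\<bar> R + (h n \<omega>)\<^sup>2 / R \<partial>M)"
      using min_int sq abs_le_min_plus_square_div[OF R] by (intro integral_mono) auto
    also have "\<dots> = (\<integral>\<omega>. min \<bar>h n \<omega>\<bar> R \<partial>M) + (\<integral>\<omega>. (h n \<omega>)\<^sup>2 \<partial>M) / R"
      using min_int sq by simp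
    also have "\<dots> < e / 2 + e / 2"
    proof (rule add_less_le_mono)
      show "(\<integral>\<omega>. (h n \<omega>)\<^sup>2 \<partial>M) / R \<le> e / 2"
        using divide_right_mono[OF bd[of n], of R] R small by linarith
    qed (rule n0[OF n])
    finally show ?thesis by simp
  qed
  then show "\<exists>n0. \<forall>n\<ge>n0. norm ((\<integral>\<omega>. \<bar>h n \<omega>\<bar> \<partial>M) - 0) < e"
    by (auto intro!: exI[of _ n0])
qed

lemma integrable_AE_limit_if_integral_bounded:
  fixes F :: "nat \<Rightarrow> 'a \<Rightarrow> real"
  assumes [measurable]: "\<And>n. F n \<in> borel_measurable M" "F' \<in> borel_measurable M"
    and nonneg: "\<And>n \<omega>. 0 \<le> F n \<omega>" and lim: "AE \<omega> in M. (\<lambda>n. F n \<omega>) \<longlonglongrightarrow> F' \<omega>"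
    and int: "\<And>n. integrable M (F n)" and bd: "\<And>n. (\<integral>\<omega>. F n \<omega> \<partial>M) \<le> C"
  shows "integrable M F'" and "(\<integral>\<omega>. F' \<omega> \<partial>M) \<le> C"
proof -
  have "0 \<le> (\<integral>\<omega>. F 0 \<omega> \<partial>M)" using nonneg by (simp add: integral_nonneg)
  then have C: "0 \<le> C" using bd[of 0] by linarith
  have F': "AE \<omega> in M. 0 \<le> F' \<omega>"
    using lim
  proof eventually_elim
    case (elim \<omega>)
    show ?case by (rule LIMSEQ_le_const[OF elim]) (use nonneg in blast)
  qed
  have "(\<integral>\<^sup>+ \<omega>. ennreal (F' \<omega>) \<partial>M) = (\<integral>\<^sup>+ \<omega>. liminf (\<lambda>n. ennreal (F n \<omega>)) \<partial>M)"
  proof (intro nn_integral_cong_AE, use lim in eventually_elim)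
    case (elim \<omega>)
    then have "(\<lambda>n. ennreal (F n \<omega>)) \<longlonglongrightarrow> ennreal (F' \<omega>)" by (rule tendsto_ennrealI)
    then show ?case by (metis lim_imp_Liminf trivial_limit_sequentially)
  qed
  also have "\<dots> \<le> liminf (\<lambda>n. \<integral>\<^sup>+ \<omega>. ennreal (F n \<omega>) \<partial>M)"
    by (rule nn_integral_liminf) measurable
  also have "\<dots> = liminf (\<lambda>n. ennreal (\<integral>\<omega>. F n \<omega> \<partial>M))"
    using int nonneg by (subst nn_integral_eq_integral) auto
  also have "\<dots> \<le> ennreal C"
    using Liminf_mono[of "\<lambda>n. ennreal (\<integral>\<omega>. F n \<omega> \<partial>M)" "\<lambda>_. ennreal C" sequentially]
    by (simp add: bd ennreal_leI Liminf_const)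
  finally have le: "(\<integral>\<^sup>+ \<omega>. ennreal (F' \<omega>) \<partial>M) \<le> ennreal C" .
  show i: "integrable M F'"
    by (rule integrableI_nonneg[OF _ F']) (use le in \<open>auto simp: top_unique[symmetric] intro: le_less_trans\<close>)
  have "ennreal (\<integral>\<omega>. F' \<omega> \<partial>M) \<le> ennreal C"
    using le i F' by (subst (asm) nn_integral_eq_integral) auto
  then show "(\<integral>\<omega>. F' \<omega> \<partial>M) \<le> C" using C by (simp add: ennreal_le_iff)
qed

lemma (in finite_measure) integrable_comp_if_exp_bounded:
  fixes g :: "real \<Rightarrow> real" and K :: "'a \<Rightarrow> real"
  assumes [measurable]: "K \<in> borel_measurable M" "g \<in> borel_measurable borel"
    and int: "integrable M (\<lambda>\<omega>. (exp (- K \<omega>))\<^sup>2)" and g: "\<And>k. \<bar>g k\<bar> \<le> B * exp (- k)"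
  shows "integrable M (\<lambda>\<omega>. g (K \<omega>))"
proof (rule Bochner_Integration.integrable_bound)
  have B: "0 \<le> B" using g[of 0] by simp
  show "integrable M (\<lambda>\<omega>. B * (1 + (exp (- K \<omega>))\<^sup>2))" using int by simp
  have "\<bar>g (K \<omega>)\<bar> \<le> B * (1 + (exp (- K \<omega>))\<^sup>2)" for \<omega>
    using g[of "K \<omega>"] mult_left_mono[OF abs_le_one_plus_square[of "exp (- K \<omega>)"] B] by simp
  then show "AE \<omega> in M. norm (g (K \<omega>)) \<le> norm (B * (1 + (exp (- K \<omega>))\<^sup>2))"
    using B by (intro AE_I2) (simp add: abs_mult)
qed measurable

lemma square_diff_le_if_exp_bounded:
  fixes g :: "real \<Rightarrow> real"
  assumes "\<And>k. \<bar>g k\<bar> \<le> B * exp (- k)"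
  shows "(g a - g b)\<^sup>2 \<le> 2 * B\<^sup>2 * (exp (- a))\<^sup>2 + 2 * B\<^sup>2 * (exp (- b))\<^sup>2"
proof -
  have g_sq: "(g k)\<^sup>2 \<le> B\<^sup>2 * (exp (- k))\<^sup>2" for k
    using power_mono[OF assms[of k] abs_ge_zero, of 2] by (simp add: power_mult_distrib)
  have "(g a - g b)\<^sup>2 \<le> 2 * (g a)\<^sup>2 + 2 * (g b)\<^sup>2"
    using zero_le_power2[of "g a + g b"] by (simp add: power2_sum power2_diff)
  then show ?thesis using g_sq[of a] g_sq[of b] by linarith
qed

lemma (in finite_measure) square_diff_comp_if_exp_bounded:
  fixes g :: "real \<Rightarrow> real" and K K' :: "'a \<Rightarrow> real"
  assumes [measurable]: "K \<in> borel_measurable M" "K' \<in> borel_measurable M" "g \<in> borel_measurable borel"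
    and int: "integrable M (\<lambda>\<omega>. (exp (- K \<omega>))\<^sup>2)" "integrable M (\<lambda>\<omega>. (exp (- K' \<omega>))\<^sup>2)"
    and g: "\<And>k. \<bar>g k\<bar> \<le> B * exp (- k)"
  shows "integrable M (\<lambda>\<omega>. (g (K \<omega>) - g (K' \<omega>))\<^sup>2)"
    and "(\<integral>\<omega>. (g (K \<omega>) - g (K' \<omega>))\<^sup>2 \<partial>M)
         \<le> 2 * B\<^sup>2 * (\<integral>\<omega>. (exp (- K \<omega>))\<^sup>2 \<partial>M) + 2 * B\<^sup>2 * (\<integral>\<omega>. (exp (- K' \<omega>))\<^sup>2 \<partial>M)"
proof -
  have bound: "integrable M (\<lambda>\<omega>. 2 * B\<^sup>2 * (exp (- K \<omega>))\<^sup>2 + 2 * B\<^sup>2 * (exp (- K' \<omega>))\<^sup>2)"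
    using int by simp
  have le: "(g (K \<omega>) - g (K' \<omega>))\<^sup>2 \<le> 2 * B\<^sup>2 * (exp (- K \<omega>))\<^sup>2 + 2 * B\<^sup>2 * (exp (- K' \<omega>))\<^sup>2" for \<omega>
    by (rule square_diff_le_if_exp_bounded[OF g])
  show sq: "integrable M (\<lambda>\<omega>. (g (K \<omega>) - g (K' \<omega>))\<^sup>2)"
  proof (rule Bochner_Integration.integrable_bound[OF bound])
    show "AE \<omega> in M. norm ((g (K \<omega>) - g (K' \<omega>))\<^sup>2)
        \<le> norm (2 * B\<^sup>2 * (exp (- K \<omega>))\<^sup>2 + 2 * B\<^sup>2 * (exp (- K' \<omega>))\<^sup>2)"
      using le by (intro AE_I2) simp
  qed measurable
  have "(\<integral>\<omega>. (g (K \<omega>) - g (K' \<omega>))\<^sup>2 \<partial>M)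
      \<le> (\<integral>\<omega>. 2 * B\<^sup>2 * (exp (- K \<omega>))\<^sup>2 + 2 * B\<^sup>2 * (exp (- K' \<omega>))\<^sup>2 \<partial>M)"
    using sq bound le by (rule integral_mono)
  then show "(\<integral>\<omega>. (g (K \<omega>) - g (K' \<omega>))\<^sup>2 \<partial>M)
      \<le> 2 * B\<^sup>2 * (\<integral>\<omega>. (exp (- K \<omega>))\<^sup>2 \<partial>M) + 2 * B\<^sup>2 * (\<integral>\<omega>. (exp (- K' \<omega>))\<^sup>2 \<partial>M)"
    using int by simp
qed

lemma (in finite_measure) integral_comp_tendsto_if_AE_tendsto:
  fixes K :: "nat \<Rightarrow> 'a \<Rightarrow> real" and g :: "real \<Rightarrow> real"
  assumes K_meas [measurable]: "\<And>n. K n \<in> borel_measurable M"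
    and K'_meas [measurable]: "K' \<in> borel_measurable M"
    and lim: "AE \<omega> in M. (\<lambda>n. K n \<omega>) \<longlonglongrightarrow> K' \<omega>"
    and int: "\<And>n. integrable M (\<lambda>\<omega>. (exp (- K n \<omega>))\<^sup>2)"
    and bd: "\<And>n. (\<integral>\<omega>. (exp (- K n \<omega>))\<^sup>2 \<partial>M) \<le> C"
    and g: "continuous_on UNIV g" and g_bound: "\<And>k. \<bar>g k\<bar> \<le> B * exp (- k)"
  shows "(\<lambda>n. \<integral>\<omega>. g (K n \<omega>) \<partial>M) \<longlonglongrightarrow> (\<integral>\<omega>. g (K' \<omega>) \<partial>M)"
proof -
  have exp_lim: "AE \<omega> in M. (\<lambda>n. (exp (- K n \<omega>))\<^sup>2) \<longlonglongrightarrow> (exp (- K' \<omega>))\<^sup>2"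
    using lim by eventually_elim (intro tendsto_intros)
  have exp_meas: "(\<lambda>\<omega>. (exp (- K n \<omega>))\<^sup>2) \<in> borel_measurable M" for n by measurable
  have exp_meas': "(\<lambda>\<omega>. (exp (- K' \<omega>))\<^sup>2) \<in> borel_measurable M" by measurable
  note Fatou = integrable_AE_limit_if_integral_bounded[OF exp_meas exp_meas' _ exp_lim int bd]
  have int': "integrable M (\<lambda>\<omega>. (exp (- K' \<omega>))\<^sup>2)" by (rule Fatou(1)) simp
  have bd': "(\<integral>\<omega>. (exp (- K' \<omega>))\<^sup>2 \<partial>M) \<le> C" by (rule Fatou(2)) simp
  have g_meas [measurable]: "g \<in> borel_measurable borel" using g by (rule borel_measurable_continuous_onI)
  define h where "h n \<omega> = g (K n \<omega>) - g (K' \<omega>)" for n \<omega>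
  have [measurable]: "h n \<in> borel_measurable M" for n unfolding h_def by measurable
  have h_sq: "integrable M (\<lambda>\<omega>. (h n \<omega>)\<^sup>2)"
    "(\<integral>\<omega>. (h n \<omega>)\<^sup>2 \<partial>M)
       \<le> 2 * B\<^sup>2 * (\<integral>\<omega>. (exp (- K n \<omega>))\<^sup>2 \<partial>M) + 2 * B\<^sup>2 * (\<integral>\<omega>. (exp (- K' \<omega>))\<^sup>2 \<partial>M)" for n
    unfolding h_def
    using square_diff_comp_if_exp_bounded[OF K_meas K'_meas g_meas int int' g_bound] by blast+
  have h_sq_bd: "(\<integral>\<omega>. (h n \<omega>)\<^sup>2 \<partial>M) \<le> 4 * B\<^sup>2 * C" for n
    using h_sq(2)[of n] mult_left_mono[OF bd[of n], of "2 * B\<^sup>2"] mult_left_mono[OF bd', of "2 * B\<^sup>2"]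
    by simp
  have h_lim: "AE \<omega> in M. (\<lambda>n. h n \<omega>) \<longlonglongrightarrow> 0"
    using lim
  proof eventually_elim
    case (elim \<omega>)
    have "isCont g (K' \<omega>)" using g by (simp add: continuous_on_eq_continuous_at)
    then have "(\<lambda>n. g (K n \<omega>)) \<longlonglongrightarrow> g (K' \<omega>)" using elim by (rule isCont_tendsto_compose)
    then show ?case unfolding h_def by (rule LIM_zero)
  qed
  have abs_h_lim: "(\<lambda>n. \<integral>\<omega>. \<bar>h n \<omega>\<bar> \<partial>M) \<longlonglongrightarrow> 0"
    using integral_abs_tendsto_zero_if_square_bounded[OF _ h_lim h_sq(1) h_sq_bd] by simp
  have diff_le: "norm ((\<integral>\<omega>. g (K n \<omega>) \<partial>M) - (\<integral>\<omega>. g (K' \<omega>) \<partial>M)) \<le> (\<integral>\<omega>. \<bar>h n \<omega>\<bar> \<partial>M)" for n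
  proof -
    have "integrable M (\<lambda>\<omega>. g (K n \<omega>))" "integrable M (\<lambda>\<omega>. g (K' \<omega>))"
      using integrable_comp_if_exp_bounded[OF _ _ int g_bound] integrable_comp_if_exp_bounded[OF _ _ int' g_bound]
      by simp_all
    then have "(\<integral>\<omega>. g (K n \<omega>) \<partial>M) - (\<integral>\<omega>. g (K' \<omega>) \<partial>M) = (\<integral>\<omega>. h n \<omega> \<partial>M)"
      unfolding h_def by simp
    then show ?thesis using integral_abs_bound[of M "h n"] by simp
  qed
  show ?thesis
    by (rule LIM_zero_cancel, rule Lim_null_comparison[OF always_eventually abs_h_lim]) (use diff_le in blast)
qed

lemma AE_tendsto_subseq_if_L2_tendsto:
  fixes K :: "nat \<Rightarrow> 'a \<Rightarrow> real"
  assumes [measurable]: "\<And>n. K n \<in> borel_measurable M" "K' \<in> borel_measurable M"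
    and int: "\<And>n. integrable M (\<lambda>\<omega>. (K n \<omega> - K' \<omega>)\<^sup>2)"
    and lim: "(\<lambda>n. \<integral>\<omega>. (K n \<omega> - K' \<omega>)\<^sup>2 \<partial>M) \<longlonglongrightarrow> 0"
  obtains r where "strict_mono r" "AE \<omega> in M. (\<lambda>n. K (r n) \<omega>) \<longlonglongrightarrow> K' \<omega>"
proof -
  obtain r where r: "strict_mono r" "AE \<omega> in M. (\<lambda>n. (K (r n) \<omega> - K' \<omega>)\<^sup>2) \<longlonglongrightarrow> 0"
    using tendsto_L1_AE_subseq[of M "\<lambda>n \<omega>. (K n \<omega> - K' \<omega>)\<^sup>2"] int lim by auto
  have "AE \<omega> in M. (\<lambda>n. K (r n) \<omega>) \<longlonglongrightarrow> K' \<omega>"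
    using r(2)
  proof eventually_elim
    case (elim \<omega>)
    then have "(\<lambda>n. sqrt ((K (r n) \<omega> - K' \<omega>)\<^sup>2)) \<longlonglongrightarrow> sqrt 0" by (intro tendsto_intros)
    then have "(\<lambda>n. K (r n) \<omega> - K' \<omega>) \<longlonglongrightarrow> 0" by (simp add: tendsto_rabs_zero_iff)
    then show ?case by (rule LIM_zero_cancel)
  qed
  with r(1) show thesis by (rule that)
qed

lemma (in finite_measure) integral_comp_tendsto_if_L2_tendsto:
  fixes K :: "nat \<Rightarrow> 'a \<Rightarrow> real" and g :: "real \<Rightarrow> real"
  assumes K: "\<And>n. K n \<in> borel_measurable M" "K' \<in> borel_measurable M"
    and L2: "\<And>n. integrable M (\<lambda>\<omega>. (K n \<omega> - K' \<omega>)\<^sup>2)"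
      "(\<lambda>n. \<integral>\<omega>. (K n \<omega> - K' \<omega>)\<^sup>2 \<partial>M) \<longlonglongrightarrow> 0"
    and int: "\<And>n. integrable M (\<lambda>\<omega>. (exp (- K n \<omega>))\<^sup>2)"
    and bd: "\<And>n. (\<integral>\<omega>. (exp (- K n \<omega>))\<^sup>2 \<partial>M) \<le> C"
    and g: "continuous_on UNIV g" "\<And>k. \<bar>g k\<bar> \<le> B * exp (- k)"
  shows "(\<lambda>n. \<integral>\<omega>. g (K n \<omega>) \<partial>M) \<longlonglongrightarrow> (\<integral>\<omega>. g (K' \<omega>) \<partial>M)"
proof (rule LIMSEQ_if_subseqs_have_LIMSEQ_subseqs)
  \<comment> \<open>every subsequence has a further subsequence converging almost everywhere\<close>
  fix s :: "nat \<Rightarrow> nat" assume s: "strict_mono s"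
  have "(\<lambda>n. \<integral>\<omega>. (K (s n) \<omega> - K' \<omega>)\<^sup>2 \<partial>M) \<longlonglongrightarrow> 0"
    using LIMSEQ_subseq_LIMSEQ[OF L2(2) s] by (simp add: comp_def)
  then obtain r where r: "strict_mono r" "AE \<omega> in M. (\<lambda>n. K (s (r n)) \<omega>) \<longlonglongrightarrow> K' \<omega>"
    using AE_tendsto_subseq_if_L2_tendsto[of "\<lambda>n. K (s n)" M K'] K L2(1) by blast
  then show "\<exists>r. strict_mono r \<and> (\<lambda>n. \<integral>\<omega>. g (K (s (r n)) \<omega>) \<partial>M) \<longlonglongrightarrow> (\<integral>\<omega>. g (K' \<omega>) \<partial>M)"
    using integral_comp_tendsto_if_AE_tendsto[of "\<lambda>n. K (s (r n))" K'] K int bd g by blast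
qed

section \<open>Square integrability and integrals over the time interval\<close>

lemma sqint_add:
  assumes "sqint N f" "sqint N g" shows "sqint N (\<lambda>x. f x + g x)"
proof -
  have [measurable]: "f \<in> borel_measurable N" "g \<in> borel_measurable N"
    using assms by (auto simp: sqint_def)
  have bound: "integrable N (\<lambda>x. 2 * (f x)\<^sup>2 + 2 * (g x)\<^sup>2)" using assms by (auto simp: sqint_def)
  have "(u + v)\<^sup>2 \<le> 2 * u\<^sup>2 + 2 * v\<^sup>2" for u v :: real
    using zero_le_power2[of "u - v"] by (simp add: power2_sum power2_diff)
  then have ae: "AE x in N. norm ((f x + g x)\<^sup>2) \<le> norm (2 * (f x)\<^sup>2 + 2 * (g x)\<^sup>2)"
    by (intro AE_I2) simp
  have "integrable N (\<lambda>x. (f x + g x)\<^sup>2)"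
    by (rule Bochner_Integration.integrable_bound[OF bound _ ae]) measurable
  then show ?thesis by (simp add: sqint_def)
qed

lemma sqint_cmult: "sqint N f \<Longrightarrow> sqint N (\<lambda>x. c * f x)"
  by (auto simp: sqint_def power_mult_distrib)

lemma sqint_diff:
  assumes "sqint N f" "sqint N g" shows "sqint N (\<lambda>x. f x - g x)"
  using sqint_add[OF assms(1) sqint_cmult[OF assms(2), of "- 1"]] by simp

lemma sqint_sum:
  "finite I \<Longrightarrow> (\<And>i. i \<in> I \<Longrightarrow> sqint N (f i)) \<Longrightarrow> sqint N (\<lambda>x. \<Sum>i\<in>I. f i x)"
  by (induction I rule: finite_induct) (auto simp: sqint_add, simp add: sqint_def)

lemma (in pair_sigma_finite) sqint_mult_fst_snd:
  assumes f: "sqint M1 f" and g: "sqint M2 g"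
  shows "sqint (M1 \<Otimes>\<^sub>M M2) (\<lambda>(x, y). f x * g y)"
proof -
  have [measurable]: "f \<in> borel_measurable M1" "g \<in> borel_measurable M2"
    using f g by (auto simp: sqint_def)
  have f2: "integrable M1 (\<lambda>x. (f x)\<^sup>2)" and g2: "integrable M2 (\<lambda>y. (g y)\<^sup>2)"
    using f g by (auto simp: sqint_def)
  have "integrable (M1 \<Otimes>\<^sub>M M2) (\<lambda>p. (f (fst p))\<^sup>2 * (g (snd p))\<^sup>2)"
  proof (rule Fubini_integrable)
    have "integrable M1 (\<lambda>x. (f x)\<^sup>2 * (\<integral>y. (g y)\<^sup>2 \<partial>M2))"
      using f2 by simp
    then show "integrable M1 (\<lambda>x. \<integral>y. norm ((f (fst (x, y)))\<^sup>2 * (g (snd (x, y)))\<^sup>2) \<partial>M2)"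
      by simp
  qed (use g2 in simp_all)
  then show ?thesis by (simp add: sqint_def split_beta' power_mult_distrib)
qed

lemma (in finite_measure) sqint_const: "sqint M (\<lambda>_. c)"
  by (simp add: sqint_def)

lemma space_Tm: "space (Tm t0 T) = {t0..T}"
  by (simp add: Tm_def space_restrict_space)

lemma emeasure_Tm_space: "emeasure (Tm t0 T) (space (Tm t0 T)) = ennreal (T - t0)"
  unfolding space_Tm unfolding Tm_def
  by (subst emeasure_restrict_space) (auto simp: emeasure_lborel_Icc_eq ennreal_neg)

lemma finite_measure_Tm: "finite_measure (Tm t0 T)"
  by (rule finite_measureI) (simp add: emeasure_Tm_space)

lemma measure_Tm_space: "t0 \<le> T \<Longrightarrow> measure (Tm t0 T) (space (Tm t0 T)) = T - t0"
  by (simp add: measure_def emeasure_Tm_space)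

lemma indicator_measurable_Tm [measurable]:
  "(\<lambda>s. indicator {t0..t} s :: real) \<in> borel_measurable (Tm t0 T)"
  unfolding Tm_def by (rule measurable_restrict_space1) simp

lemma integrable_if_sqint_Tm: "sqint (Tm t0 T) f \<Longrightarrow> integrable (Tm t0 T) f"
  unfolding sqint_def using finite_measure.square_integrable_imp_integrable[OF finite_measure_Tm] by blast

lemma set_integral_eq_integral_Tm:
  fixes f :: "real \<Rightarrow> real"
  assumes "t0 \<le> t" "t \<le> T"
  shows "(LINT s:{t0..t}|lborel. f s) = (\<integral>s. indicator {t0..t} s * f s \<partial>Tm t0 T)"
proof -
  have "(\<integral>s. indicator {t0..t} s * f s \<partial>Tm t0 T)
      = (\<integral>s. indicator {t0..T} s *\<^sub>R (indicator {t0..t} s * f s) \<partial>lborel)"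
    unfolding Tm_def by (subst integral_restrict_space) simp_all
  also have "\<dots> = (\<integral>s. indicator {t0..t} s *\<^sub>R f s \<partial>lborel)"
    using assms by (intro Bochner_Integration.integral_cong refl) (simp add: indicator_def)
  finally show ?thesis by (simp add: set_lebesgue_integral_def)
qed

lemma integrable_indicator_mult_Tm:
  fixes f :: "real \<Rightarrow> real"
  assumes "integrable (Tm t0 T) f"
  shows "integrable (Tm t0 T) (\<lambda>s. indicator {t0..t} s * f s)"
proof (rule Bochner_Integration.integrable_bound[OF assms])
  show "(\<lambda>s. indicator {t0..t} s * f s) \<in> borel_measurable (Tm t0 T)"
    using borel_measurable_integrable[OF assms] by measurable
qed (auto intro!: AE_I2 simp: indicator_def)

lemma set_integral_add_sum_Tm:
  fixes f :: "real \<Rightarrow> real" and g :: "'i \<Rightarrow> real \<Rightarrow> real"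
  assumes t: "t0 \<le> t" "t \<le> T" and f: "integrable (Tm t0 T) f"
    and J: "finite J" and g: "\<And>j. j \<in> J \<Longrightarrow> integrable (Tm t0 T) (g j)"
  shows "(LINT s:{t0..t}|lborel. f s + (\<Sum>j\<in>J. c j * g j s))
       = (LINT s:{t0..t}|lborel. f s) + (\<Sum>j\<in>J. c j * (LINT s:{t0..t}|lborel. g j s))"
proof -
  have gJ: "integrable (Tm t0 T) (\<lambda>s. c j * (indicator {t0..t} s * g j s))" if "j \<in> J" for j
    using integrable_indicator_mult_Tm[OF g[OF that]] by simp
  have "(LINT s:{t0..t}|lborel. f s + (\<Sum>j\<in>J. c j * g j s))
      = (\<integral>s. indicator {t0..t} s * f s + (\<Sum>j\<in>J. c j * (indicator {t0..t} s * g j s)) \<partial>Tm t0 T)"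
    by (simp add: set_integral_eq_integral_Tm[OF t] distrib_left sum_distrib_left mult_ac)
  also have "\<dots> = (\<integral>s. indicator {t0..t} s * f s \<partial>Tm t0 T)
      + (\<Sum>j\<in>J. c j * (\<integral>s. indicator {t0..t} s * g j s \<partial>Tm t0 T))"
    using integrable_indicator_mult_Tm[OF f] gJ by (simp add: Bochner_Integration.integral_sum)
  finally show ?thesis by (simp add: set_integral_eq_integral_Tm[OF t])
qed

lemma Ka_eq_linear:
  assumes t: "t0 \<le> t" "t \<le> T" and mu: "integrable (Tm t0 T) mu"
    and \<phi>: "\<And>j. j < N \<Longrightarrow> integrable (Tm t0 T) (\<phi> j)"
  shows "Ka mu \<nu> \<phi> t0 N t v
       = (LINT s:{t0..t}|lborel. mu s) + (\<Sum>j<N. sqrt (\<nu> j) * (LINT s:{t0..t}|lborel. \<phi> j s) * v j)"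
  using set_integral_add_sum_Tm[OF t mu finite_lessThan, where g=\<phi> and c="\<lambda>j. sqrt (\<nu> j) * v j"] \<phi>
  by (simp add: Ka_def mult_ac)

section \<open>Densities of independent log-scalings\<close>

lemma continuous_on_comp_mult_exp:
  fixes f :: "real \<Rightarrow> real"
  assumes cone: "\<And>y c. 0 < c \<Longrightarrow> y * c \<in> D \<longleftrightarrow> y \<in> D"
    and cont: "continuous_on D f" and out: "\<And>y. y \<notin> D \<Longrightarrow> f y = 0"
  shows "continuous_on UNIV (\<lambda>k. f (x * exp (- k)))"
proof (cases "x \<in> D")
  case True
  then have "(\<lambda>k. x * exp (- k)) ` UNIV \<subseteq> D" using cone by auto
  then show ?thesis
    by (rule continuous_on_compose2[OF cont, rotated]) (intro continuous_intros)
next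
  case False
  then have "(\<lambda>k. f (x * exp (- k))) = (\<lambda>_. 0)" using cone out by auto
  then show ?thesis by (simp only: continuous_on_const)
qed

lemma Dset_mult_pos_iff: "0 < c \<Longrightarrow> y * c \<in> Dset M x0 \<longleftrightarrow> y \<in> Dset M x0"
  by (auto simp: Dset_def zero_less_mult_iff mult_less_0_iff)

lemma nn_integral_indicator_mult_exp:
  fixes f :: "real \<Rightarrow> real"
  assumes [measurable]: "f \<in> borel_measurable borel" "A \<in> sets borel"
  shows "(\<integral>\<^sup>+ y. ennreal (f y) * indicator A (y * exp k) \<partial>lborel)
       = (\<integral>\<^sup>+ z. ennreal (f (z * exp (- k)) * exp (- k)) * indicator A z \<partial>lborel)"
proof -
  define F where "F z = ennreal (f (z * exp (- k)) * exp (- k)) * indicator A z" for z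
  have [measurable]: "F \<in> borel_measurable borel" unfolding F_def by measurable
  have "(\<integral>\<^sup>+ z. F z \<partial>lborel) = ennreal (exp k) * (\<integral>\<^sup>+ y. F (exp k * y) \<partial>lborel)"
    using nn_integral_real_affine[of F "exp k" 0] by simp
  also have "\<dots> = (\<integral>\<^sup>+ y. ennreal (exp k) * F (exp k * y) \<partial>lborel)"
    by (subst nn_integral_cmult) auto
  also have "\<dots> = (\<integral>\<^sup>+ y. ennreal (f y) * indicator A (y * exp k) \<partial>lborel)"
  proof (intro nn_integral_cong)
    fix y :: real
    have y: "y * exp k * exp (- k) = y" by (simp add: exp_minus)
    have "exp k * (f y * exp (- k)) = f y" by (simp add: exp_minus field_simps)
    then have "ennreal (exp k) * ennreal (f y * exp (- k)) = ennreal (f y)"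
      by (metis ennreal_mult' exp_ge_zero)
    then show "ennreal (exp k) * F (exp k * y) = ennreal (f y) * indicator A (y * exp k)"
      by (simp add: F_def y mult.commute[of "exp k"] mult.assoc[symmetric])
  qed
  finally show ?thesis by (simp add: F_def)
qed

lemma (in prob_space) nn_integral_indicator_distributed_mult_exp:
  fixes X :: "'a \<Rightarrow> real" and f :: "real \<Rightarrow> real"
  assumes X: "distributed M lborel X (\<lambda>y. ennreal (f y))" and f_nonneg: "\<And>y. 0 \<le> f y"
    and A [measurable]: "A \<in> sets borel"
  shows "(\<integral>\<^sup>+ y. indicator A (y * exp k) \<partial>distr M borel X)
       = (\<integral>\<^sup>+ z. ennreal (f (z * exp (- k)) * exp (- k)) * indicator A z \<partial>lborel)"
proof -
  have [measurable]: "X \<in> borel_measurable M" "f \<in> borel_measurable borel"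
    using distributed_measurable[OF X] distributed_real_measurable[OF _ X] f_nonneg by auto
  have "(\<integral>\<^sup>+ y. indicator A (y * exp k) \<partial>distr M borel X) = (\<integral>\<^sup>+ \<omega>. indicator A (X \<omega> * exp k) \<partial>M)"
    by (rule nn_integral_distr) auto
  also have "\<dots> = (\<integral>\<^sup>+ y. ennreal (f y) * indicator A (y * exp k) \<partial>lborel)"
    by (rule distributed_nn_integral[OF X, symmetric]) simp
  finally show ?thesis by (simp add: nn_integral_indicator_mult_exp)
qed

text \<open>Condition on \<open>K\<close>: by independence the joint law of \<open>(X, K)\<close> is a product, and for fixed
  \<open>K = k\<close> the law of \<open>X e\<^sup>k\<close> is computed by the substitution \<open>z = y e\<^sup>k\<close>.\<close>
lemma (in prob_space) distributed_mult_exp_if_indep_var: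
  fixes X K :: "'a \<Rightarrow> real" and f :: "real \<Rightarrow> real"
  assumes X: "distributed M lborel X (\<lambda>y. ennreal (f y))" and f_nonneg: "\<And>y. 0 \<le> f y"
    and K [measurable]: "K \<in> borel_measurable M" and indep: "indep_var borel X borel K"
  shows "distributed M lborel (\<lambda>\<omega>. X \<omega> * exp (K \<omega>))
           (\<lambda>z. \<integral>\<^sup>+ \<omega>. ennreal (f (z * exp (- K \<omega>)) * exp (- K \<omega>)) \<partial>M)"
proof -
  have [measurable]: "X \<in> borel_measurable M" "f \<in> borel_measurable borel"
    using distributed_measurable[OF X] distributed_real_measurable[OF _ X] f_nonneg by auto
  define g where "g z k = ennreal (f (z * exp (- k)) * exp (- k))" for z k
  have [measurable]: "(\<lambda>(z, k). g z k) \<in> borel_measurable (borel \<Otimes>\<^sub>M borel)" unfolding g_def by measurable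
  define DX where "DX = distr M borel X"
  define DK where "DK = distr M borel K"
  have sets_D [measurable_cong]: "sets DX = sets borel" "sets DK = sets borel"
    unfolding DX_def DK_def by simp_all
  interpret DX: prob_space DX unfolding DX_def by (rule prob_space_distr) simp
  interpret DK: prob_space DK unfolding DK_def by (rule prob_space_distr) simp
  interpret DXK: pair_sigma_finite DX DK ..
  interpret lborel_DK: pair_sigma_finite lborel DK ..
  have joint: "distr M (borel \<Otimes>\<^sub>M borel) (\<lambda>\<omega>. (X \<omega>, K \<omega>)) = DX \<Otimes>\<^sub>M DK"
    using indep unfolding indep_var_distribution_eq DX_def DK_def by simp
  have "emeasure (distr M lborel (\<lambda>\<omega>. X \<omega> * exp (K \<omega>))) A
      = (\<integral>\<^sup>+ z. (\<integral>\<^sup>+ \<omega>. g z (K \<omega>) \<partial>M) * indicator A z \<partial>lborel)"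
    if [measurable]: "A \<in> sets borel" for A
  proof -
    have "emeasure (distr M lborel (\<lambda>\<omega>. X \<omega> * exp (K \<omega>))) A
        = (\<integral>\<^sup>+ \<omega>. indicator A (X \<omega> * exp (K \<omega>)) \<partial>M)"
      by (subst nn_integral_indicator[symmetric], simp, subst nn_integral_distr) auto
    also have "\<dots> = (\<integral>\<^sup>+ p. indicator A (fst p * exp (snd p)) \<partial>(DX \<Otimes>\<^sub>M DK))"
      unfolding joint[symmetric] by (subst nn_integral_distr) auto
    also have "\<dots> = (\<integral>\<^sup>+ k. (\<integral>\<^sup>+ y. indicator A (y * exp k) \<partial>DX) \<partial>DK)"
      by (subst DXK.nn_integral_snd[symmetric]) auto
    also have "\<dots> = (\<integral>\<^sup>+ k. (\<integral>\<^sup>+ z. g z k * indicator A z \<partial>lborel) \<partial>DK)"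
      unfolding DX_def g_def by (simp add: nn_integral_indicator_distributed_mult_exp[OF X f_nonneg])
    also have "\<dots> = (\<integral>\<^sup>+ z. (\<integral>\<^sup>+ k. g z k \<partial>DK) * indicator A z \<partial>lborel)"
      by (subst lborel_DK.Fubini') (auto simp: nn_integral_multc)
    also have "\<dots> = (\<integral>\<^sup>+ z. (\<integral>\<^sup>+ \<omega>. g z (K \<omega>) \<partial>M) * indicator A z \<partial>lborel)"
      unfolding DK_def by (subst nn_integral_distr) auto
    finally show ?thesis .
  qed
  then show ?thesis
    unfolding distributed_def g_def[symmetric]
    by (auto intro!: measure_eqI simp: emeasure_density)
qed

lemma (in prob_space) indep_set_sigma_sets_directed_Union:
  assumes X: "Int_stable X" "X \<subseteq> events"
    and F: "\<And>i. i \<in> I \<Longrightarrow> Int_stable (F i)" "\<And>i. i \<in> I \<Longrightarrow> F i \<subseteq> events"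
      "\<And>i. i \<in> I \<Longrightarrow> indep_set X (F i)"
    and directed: "\<And>i j. i \<in> I \<Longrightarrow> j \<in> I \<Longrightarrow> \<exists>k\<in>I. F i \<subseteq> F k \<and> F j \<subseteq> F k"
  shows "indep_set (sigma_sets (space M) X) (sigma_sets (space M) (\<Union>i\<in>I. F i))"
proof -
  have "indep_set X (\<Union>i\<in>I. F i)"
  proof (rule indep_setI)
    fix a b assume "a \<in> X" "b \<in> (\<Union>i\<in>I. F i)"
    then show "prob (a \<inter> b) = prob a * prob b" using F(3) by (auto intro: indep_setD)
  qed (use X F in auto)
  moreover have "Int_stable (\<Union>i\<in>I. F i)"
  proof (rule Int_stableI)
    fix a b assume "a \<in> (\<Union>i\<in>I. F i)" "b \<in> (\<Union>i\<in>I. F i)"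
    then obtain i j where "i \<in> I" "a \<in> F i" "j \<in> I" "b \<in> F j" by blast
    with directed obtain k where "k \<in> I" "a \<in> F k" "b \<in> F k" by blast
    with F(1) show "a \<inter> b \<in> (\<Union>i\<in>I. F i)" by (auto dest: Int_stableD)
  qed
  ultimately have "indep_sets (\<lambda>i. sigma_sets (space M) (case_bool X (\<Union>i\<in>I. F i) i)) UNIV"
    unfolding indep_set_def by (intro indep_sets_sigma) (auto split: bool.split intro: X)
  then show ?thesis
    unfolding indep_set_def by (rule indep_sets_mono_sets) (auto split: bool.split)
qed

lemma Int_stable_vimage_borel: "Int_stable {X -` A \<inter> space M | A. A \<in> sets borel}"
proof (rule Int_stableI)
  fix b1 b2 assume "b1 \<in> {X -` A \<inter> space M | A. A \<in> sets borel}" "b2 \<in> {X -` A \<inter> space M | A. A \<in> sets borel}"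
  then obtain A1 A2 where "A1 \<in> sets borel" "A2 \<in> sets borel" "b1 \<inter> b2 = X -` (A1 \<inter> A2) \<inter> space M"
    by blast
  then show "b1 \<inter> b2 \<in> {X -` A \<inter> space M | A. A \<in> sets borel}" by blast
qed

section \<open>The random growth model\<close>

lemma enat_trunc_idx_le: "enat (trunc_idx L n) \<le> L"
  by (cases L) (auto simp: trunc_idx_def)

lemma trunc_idx_eq_lessThan: "{j. j < Suc n \<and> enat j < L} = {..<trunc_idx L n}"
  by (cases L) (auto simp: trunc_idx_def)

lemma enat_less_if_less_trunc_idx: "j < trunc_idx L n \<Longrightarrow> enat j < L"
  using enat_trunc_idx_le[of L n] by (meson enat_ord_simps(2) order_less_le_trans)

lemma trunc_idx_pos: "L \<noteq> 0 \<Longrightarrow> 1 \<le> trunc_idx L n"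
  by (cases L) (auto simp: trunc_idx_def zero_enat_def)

lemma trunc_idx_zero: "L = 0 \<Longrightarrow> trunc_idx L n = 0"
  by (auto simp: trunc_idx_def zero_enat_def)

locale random_growth_model = prob_space M for M :: "'a measure" +
  fixes t0 T :: real and x0 :: "'a \<Rightarrow> real" and a :: "real \<Rightarrow> 'a \<Rightarrow> real"
    and L :: enat and \<nu> :: "nat \<Rightarrow> real" and \<phi> :: "nat \<Rightarrow> real \<Rightarrow> real"
    and \<xi> :: "nat \<Rightarrow> 'a \<Rightarrow> real"
    and f0 :: "real \<Rightarrow> real" and fxi :: "nat \<Rightarrow> (nat \<Rightarrow> real) \<Rightarrow> real"
  assumes t0_less_T: "t0 < T"
    and a_sqint: "sqint (Tm t0 T \<Otimes>\<^sub>M M) (\<lambda>(t, \<omega>). a t \<omega>)"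
    and \<phi>_sqint: "\<And>j. enat j < L \<Longrightarrow> sqint (Tm t0 T) (\<phi> j)"
    and \<xi>_sqint: "\<And>j. enat j < L \<Longrightarrow> sqint M (\<xi> j)"
    and KL_tendsto: "(\<lambda>n. \<integral>(t, \<omega>). (a t \<omega> - mean_fun M a t
                       - (\<Sum>j\<in>{j. j < n \<and> enat j < L}. sqrt (\<nu> j) * \<phi> j t * \<xi> j \<omega>))\<^sup>2 \<partial>(Tm t0 T \<Otimes>\<^sub>M M))
                  \<longlonglongrightarrow> 0"
    and x0_distributed: "distributed M lborel x0 (\<lambda>y. ennreal (f0 y))"
    and f0_nonneg: "\<And>y. 0 \<le> f0 y"
    and f0_outside: "\<And>y. y \<notin> Dset M x0 \<Longrightarrow> f0 y = 0"
    and \<xi>_distributed: "\<And>N. enat N \<le> L \<Longrightarrow> distributed M (RN N) (xivec \<xi> N) (\<lambda>v. ennreal (fxi N v))"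
    and fxi_nonneg: "\<And>N v. 0 \<le> fxi N v"
    and x0_\<xi>_indep: "\<And>N. 1 \<le> N \<Longrightarrow> enat N \<le> L \<Longrightarrow>
                    indep_set {x0 -` A \<inter> space M | A. A \<in> sets borel}
                      {xivec \<xi> N -` B \<inter> space M | B. B \<in> sets (RN N)}"
    and f0_continuous: "continuous_on (Dset M x0) f0"
    and f0_bounded: "bounded (f0 ` Dset M x0)"
    and exp_K_trunc_bounded: "\<exists>C. \<forall>N t. 1 \<le> N \<longrightarrow> enat N \<le> L \<longrightarrow> t \<in> {t0..T} \<longrightarrow>
               integrable M (\<lambda>\<omega>. (exp (- Ka (mean_fun M a) \<nu> \<phi> t0 N t (xivec \<xi> N \<omega>)))\<^sup>2) \<and>
               sqrt (\<integral>\<omega>. (exp (- Ka (mean_fun M a) \<nu> \<phi> t0 N t (xivec \<xi> N \<omega>)))\<^sup>2 \<partial>M) \<le> C"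
begin

abbreviation mu :: "real \<Rightarrow> real" where "mu \<equiv> mean_fun M a"

definition K :: "real \<Rightarrow> 'a \<Rightarrow> real" where
  "K t \<omega> = (LINT s:{t0..t}|lborel. a s \<omega>)"

definition K_trunc :: "real \<Rightarrow> nat \<Rightarrow> 'a \<Rightarrow> real" where
  "K_trunc t n \<omega> = Ka mu \<nu> \<phi> t0 (trunc_idx L n) t (xivec \<xi> (trunc_idx L n) \<omega>)"

definition KL_remainder :: "nat \<Rightarrow> real \<Rightarrow> 'a \<Rightarrow> real" where
  "KL_remainder n t \<omega> = a t \<omega> - mu t - (\<Sum>j\<in>{j. j < n \<and> enat j < L}. sqrt (\<nu> j) * \<phi> j t * \<xi> j \<omega>)"

sublocale Tm_M: pair_sigma_finite "Tm t0 T" M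
  by (intro pair_sigma_finite.intro finite_measure.sigma_finite_measure[OF finite_measure_Tm]
      prob_space_imp_sigma_finite[OF prob_space_axioms])

sublocale M_Tm: pair_sigma_finite M "Tm t0 T"
  by (intro pair_sigma_finite.intro finite_measure.sigma_finite_measure[OF finite_measure_Tm]
      prob_space_imp_sigma_finite[OF prob_space_axioms])

lemma a_measurable [measurable]: "(\<lambda>(t, \<omega>). a t \<omega>) \<in> borel_measurable (Tm t0 T \<Otimes>\<^sub>M M)"
  using a_sqint by (simp add: sqint_def)

lemma AE_integrable_path: "AE \<omega> in M. integrable (Tm t0 T) (\<lambda>t. a t \<omega>)"
proof -
  have "finite_measure (Tm t0 T \<Otimes>\<^sub>M M)"
    by (rule finite_measure_pair_measure[OF finite_measure_axioms finite_measure_Tm])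
  then have "integrable (Tm t0 T \<Otimes>\<^sub>M M) (\<lambda>(t, \<omega>). a t \<omega>)"
    using finite_measure.square_integrable_imp_integrable[OF _ a_measurable] a_sqint
    by (simp add: sqint_def split_beta')
  from M_Tm.AE_integrable_fst'[OF Tm_M.integrable_product_swap[OF this]] show ?thesis
    by (simp add: split_beta')
qed

lemma mu_sqint: "sqint (Tm t0 T) mu"
proof -
  have a2: "integrable (Tm t0 T \<Otimes>\<^sub>M M) (\<lambda>(t, \<omega>). (a t \<omega>)\<^sup>2)"
    using a_sqint by (simp add: sqint_def split_beta')
  have mu_measurable [measurable]: "mu \<in> borel_measurable (Tm t0 T)"
    unfolding mean_fun_def by measurable
  have "AE t in Tm t0 T. integrable M (\<lambda>\<omega>. (a t \<omega>)\<^sup>2)"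
    using Tm_M.AE_integrable_fst'[OF a2] by simp
  then have ae: "AE t in Tm t0 T. norm ((mu t)\<^sup>2) \<le> norm (\<integral>\<omega>. (a t \<omega>)\<^sup>2 \<partial>M)"
  proof (rule AE_mp, intro AE_I2 impI)
    fix t assume t: "t \<in> space (Tm t0 T)" and "integrable M (\<lambda>\<omega>. (a t \<omega>)\<^sup>2)"
    moreover have "a t \<in> borel_measurable M" using measurable_Pair2[OF a_measurable t] by simp
    ultimately have "(mu t)\<^sup>2 \<le> (\<integral>\<omega>. (a t \<omega>)\<^sup>2 \<partial>M)"
      using square_integral_le_measure_times_integral_square[of "a t"] by (simp add: mean_fun_def prob_space)
    then show "norm ((mu t)\<^sup>2) \<le> norm (\<integral>\<omega>. (a t \<omega>)\<^sup>2 \<partial>M)" by simp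
  qed
  have "integrable (Tm t0 T) (\<lambda>t. \<integral>\<omega>. (a t \<omega>)\<^sup>2 \<partial>M)"
    using Tm_M.integrable_fst'[OF a2] by simp
  then have "integrable (Tm t0 T) (\<lambda>t. (mu t)\<^sup>2)"
    by (rule Bochner_Integration.integrable_bound[OF _ _ ae]) measurable
  then show ?thesis by (simp add: sqint_def)
qed

lemma integrable_mu: "integrable (Tm t0 T) mu"
  by (rule integrable_if_sqint_Tm[OF mu_sqint])

lemma integrable_\<phi>: "enat j < L \<Longrightarrow> integrable (Tm t0 T) (\<phi> j)"
  by (rule integrable_if_sqint_Tm[OF \<phi>_sqint])

lemma KL_remainder_sqint: "sqint (Tm t0 T \<Otimes>\<^sub>M M) (\<lambda>(t, \<omega>). KL_remainder n t \<omega>)"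
proof -
  define J where "J = {j. j < n \<and> enat j < L}"
  have mu: "sqint (Tm t0 T \<Otimes>\<^sub>M M) (\<lambda>(t, \<omega>). mu t)"
    using Tm_M.sqint_mult_fst_snd[OF mu_sqint sqint_const[of 1]] by simp
  have "sqint (Tm t0 T \<Otimes>\<^sub>M M) (\<lambda>(t, \<omega>). sqrt (\<nu> j) * (\<phi> j t * \<xi> j \<omega>))" if "j \<in> J" for j
    using sqint_cmult[OF Tm_M.sqint_mult_fst_snd[OF \<phi>_sqint \<xi>_sqint]] that
    by (simp add: J_def split_beta')
  then have sum: "sqint (Tm t0 T \<Otimes>\<^sub>M M) (\<lambda>x. \<Sum>j\<in>J. (\<lambda>(t, \<omega>). sqrt (\<nu> j) * (\<phi> j t * \<xi> j \<omega>)) x)"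
    by (rule sqint_sum[rotated]) (auto simp: J_def)
  from sqint_diff[OF sqint_diff[OF a_sqint mu] sum] show ?thesis
    by (simp add: KL_remainder_def J_def split_beta' mult.assoc)
qed

lemma K_trunc_eq:
  assumes t: "t0 \<le> t" "t \<le> T"
  shows "K_trunc t n \<omega> = (LINT s:{t0..t}|lborel. mu s)
           + (\<Sum>j<trunc_idx L n. sqrt (\<nu> j) * (LINT s:{t0..t}|lborel. \<phi> j s) * \<xi> j \<omega>)"
proof -
  have "\<And>j. j < trunc_idx L n \<Longrightarrow> integrable (Tm t0 T) (\<phi> j)"
    using integrable_\<phi> enat_less_if_less_trunc_idx by blast
  then show ?thesis
    unfolding K_trunc_def by (simp add: Ka_eq_linear[OF t integrable_mu] xivec_def)
qed


lemma \<xi>_measurable: "enat j < L \<Longrightarrow> \<xi> j \<in> borel_measurable M"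
  using \<xi>_sqint by (simp add: sqint_def)

lemma K_trunc_measurable:
  assumes \<xi>: "\<And>j. enat j < L \<Longrightarrow> \<xi> j \<in> borel_measurable N" and t: "t0 \<le> t" "t \<le> T"
  shows "K_trunc t n \<in> borel_measurable N"
proof -
  have [measurable]: "\<xi> j \<in> borel_measurable N" if "j \<in> {..<trunc_idx L n}" for j
    using \<xi> enat_less_if_less_trunc_idx that by blast
  have "K_trunc t n = (\<lambda>\<omega>. (LINT s:{t0..t}|lborel. mu s)
           + (\<Sum>j<trunc_idx L n. sqrt (\<nu> j) * (LINT s:{t0..t}|lborel. \<phi> j s) * \<xi> j \<omega>))"
    using K_trunc_eq[OF t] by blast
  also have "\<dots> \<in> borel_measurable N" by measurable
  finally show ?thesis .
qed

lemma K_eq_integral_Tm: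
  "t0 \<le> t \<Longrightarrow> t \<le> T \<Longrightarrow> K t \<omega> = (\<integral>s. indicator {t0..t} s * a s \<omega> \<partial>Tm t0 T)"
  unfolding K_def by (rule set_integral_eq_integral_Tm)

lemma K_measurable:
  assumes t: "t0 \<le> t" "t \<le> T"
  shows "K t \<in> borel_measurable M"
proof -
  have "(\<lambda>(s, \<omega>). indicator {t0..t} s * a s \<omega>) \<in> borel_measurable (Tm t0 T \<Otimes>\<^sub>M M)"
    by measurable
  then have "(\<lambda>(\<omega>, s). indicator {t0..t} s * a s \<omega>) \<in> borel_measurable (M \<Otimes>\<^sub>M Tm t0 T)"
    using measurable_pair_swap by fastforce
  then have "(\<lambda>\<omega>. \<integral>s. indicator {t0..t} s * a s \<omega> \<partial>Tm t0 T) \<in> borel_measurable M"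
    by (rule sigma_finite_measure.borel_measurable_lebesgue_integral[OF finite_measure.sigma_finite_measure[OF finite_measure_Tm]])
  then show ?thesis using K_eq_integral_Tm[OF t] by presburger
qed

lemma K_minus_K_trunc:
  assumes t: "t0 \<le> t" "t \<le> T"
  shows "AE \<omega> in M. K t \<omega> - K_trunc t n \<omega> = (LINT s:{t0..t}|lborel. KL_remainder (Suc n) s \<omega>)"
  using AE_integrable_path
proof eventually_elim
  case (elim \<omega>)
  have \<phi>: "\<And>j. j \<in> {..<trunc_idx L n} \<Longrightarrow> integrable (Tm t0 T) (\<phi> j)"
    using integrable_\<phi> enat_less_if_less_trunc_idx by blast
  have "KL_remainder (Suc n) s \<omega>
      = (a s \<omega> - mu s) + (\<Sum>j<trunc_idx L n. - (sqrt (\<nu> j) * \<xi> j \<omega>) * \<phi> j s)" for s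
    unfolding KL_remainder_def trunc_idx_eq_lessThan by (simp add: sum_negf mult_ac)
  then have "(LINT s:{t0..t}|lborel. KL_remainder (Suc n) s \<omega>)
      = (LINT s:{t0..t}|lborel. a s \<omega> - mu s)
        + (\<Sum>j<trunc_idx L n. - (sqrt (\<nu> j) * \<xi> j \<omega>) * (LINT s:{t0..t}|lborel. \<phi> j s))"
    using set_integral_add_sum_Tm[OF t Bochner_Integration.integrable_diff[OF elim integrable_mu]
        finite_lessThan, where g=\<phi> and c="\<lambda>j. - (sqrt (\<nu> j) * \<xi> j \<omega>)"] \<phi>
    by simp
  also have "(LINT s:{t0..t}|lborel. a s \<omega> - mu s) = K t \<omega> - (LINT s:{t0..t}|lborel. mu s)"
    using integrable_indicator_mult_Tm[OF elim] integrable_indicator_mult_Tm[OF integrable_mu]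
    by (simp add: K_eq_integral_Tm[OF t] set_integral_eq_integral_Tm[OF t] right_diff_distrib)
  finally show ?case
    by (simp add: K_trunc_eq[OF t] sum_negf mult_ac)
qed

lemma KL_remainder_square_Fubini:
  shows "AE \<omega> in M. integrable (Tm t0 T) (\<lambda>s. (KL_remainder n s \<omega>)\<^sup>2)"
    and "integrable M (\<lambda>\<omega>. \<integral>s. (KL_remainder n s \<omega>)\<^sup>2 \<partial>Tm t0 T)"
    and "(\<integral>\<omega>. (\<integral>s. (KL_remainder n s \<omega>)\<^sup>2 \<partial>Tm t0 T) \<partial>M)
       = (\<integral>(t, \<omega>). (KL_remainder n t \<omega>)\<^sup>2 \<partial>(Tm t0 T \<Otimes>\<^sub>M M))"
proof -
  have R2: "integrable (Tm t0 T \<Otimes>\<^sub>M M) (\<lambda>(t, \<omega>). (KL_remainder n t \<omega>)\<^sup>2)"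
    using KL_remainder_sqint[of n] by (simp add: sqint_def split_beta')
  have swap: "integrable (M \<Otimes>\<^sub>M Tm t0 T) (\<lambda>(\<omega>, t). (KL_remainder n t \<omega>)\<^sup>2)"
    using Tm_M.integrable_product_swap[OF R2] by (simp add: split_beta')
  show "AE \<omega> in M. integrable (Tm t0 T) (\<lambda>s. (KL_remainder n s \<omega>)\<^sup>2)"
    using M_Tm.AE_integrable_fst'[OF swap] by simp
  show "integrable M (\<lambda>\<omega>. \<integral>s. (KL_remainder n s \<omega>)\<^sup>2 \<partial>Tm t0 T)"
    using M_Tm.integrable_fst'[OF swap] by simp
  have "(\<integral>\<omega>. (\<integral>s. (KL_remainder n s \<omega>)\<^sup>2 \<partial>Tm t0 T) \<partial>M)
      = (\<integral>(\<omega>, t). (KL_remainder n t \<omega>)\<^sup>2 \<partial>(M \<Otimes>\<^sub>M Tm t0 T))"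
    using M_Tm.integral_fst'[OF swap] by simp
  also have "\<dots> = (\<integral>(t, \<omega>). (KL_remainder n t \<omega>)\<^sup>2 \<partial>(Tm t0 T \<Otimes>\<^sub>M M))"
    using Tm_M.integral_product_swap[OF borel_measurable_integrable[OF R2]] by (simp add: split_beta')
  finally show "(\<integral>\<omega>. (\<integral>s. (KL_remainder n s \<omega>)\<^sup>2 \<partial>Tm t0 T) \<partial>M)
       = (\<integral>(t, \<omega>). (KL_remainder n t \<omega>)\<^sup>2 \<partial>(Tm t0 T \<Otimes>\<^sub>M M))" .
qed


lemma KL_remainder_measurable [measurable]:
  "(\<lambda>(t, \<omega>). KL_remainder n t \<omega>) \<in> borel_measurable (Tm t0 T \<Otimes>\<^sub>M M)"
  using KL_remainder_sqint[of n] by (simp add: sqint_def)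

lemma K_trunc_minus_K_square_le:
  assumes t: "t0 \<le> t" "t \<le> T"
  shows "AE \<omega> in M. (K_trunc t n \<omega> - K t \<omega>)\<^sup>2
           \<le> (T - t0) * (\<integral>s. (KL_remainder (Suc n) s \<omega>)\<^sup>2 \<partial>Tm t0 T)"
  using K_minus_K_trunc[OF t, of n] KL_remainder_square_Fubini(1)[of "Suc n"] AE_space
proof eventually_elim
  case (elim \<omega>)
  define r where "r s = indicator {t0..t} s * KL_remainder (Suc n) s \<omega>" for s
  have [measurable]: "(\<lambda>s. KL_remainder (Suc n) s \<omega>) \<in> borel_measurable (Tm t0 T)"
    using measurable_Pair1[OF KL_remainder_measurable elim(3)] by simp
  have r_le: "(r s)\<^sup>2 \<le> (KL_remainder (Suc n) s \<omega>)\<^sup>2" for s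
    by (simp add: r_def indicator_def)
  have r2: "integrable (Tm t0 T) (\<lambda>s. (r s)\<^sup>2)"
  proof (rule Bochner_Integration.integrable_bound[OF elim(2)])
    show "(\<lambda>s. (r s)\<^sup>2) \<in> borel_measurable (Tm t0 T)" unfolding r_def by measurable
  qed (use r_le in \<open>simp add: AE_I2\<close>)
  have "(K_trunc t n \<omega> - K t \<omega>)\<^sup>2 = (\<integral>s. r s \<partial>Tm t0 T)\<^sup>2"
    using elim(1) by (simp add: r_def set_integral_eq_integral_Tm[OF t] power2_commute)
  also have "\<dots> \<le> (T - t0) * (\<integral>s. (r s)\<^sup>2 \<partial>Tm t0 T)"
    using finite_measure.square_integral_le_measure_times_integral_square[OF finite_measure_Tm _ r2]
      t0_less_T by (simp add: r_def measure_Tm_space)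
  also have "\<dots> \<le> (T - t0) * (\<integral>s. (KL_remainder (Suc n) s \<omega>)\<^sup>2 \<partial>Tm t0 T)"
    using r2 elim(2) r_le t0_less_T by (intro mult_left_mono integral_mono) auto
  finally show ?case .
qed

lemma K_trunc_L2_tendsto:
  assumes t: "t0 \<le> t" "t \<le> T"
  shows "integrable M (\<lambda>\<omega>. (K_trunc t n \<omega> - K t \<omega>)\<^sup>2)"
    and "(\<lambda>n. \<integral>\<omega>. (K_trunc t n \<omega> - K t \<omega>)\<^sup>2 \<partial>M) \<longlonglongrightarrow> 0"
proof -
  have [measurable]: "K_trunc t n \<in> borel_measurable M" "K t \<in> borel_measurable M" for n
    using K_trunc_measurable[OF \<xi>_measurable t] K_measurable[OF t] by auto
  define Q where "Q n \<omega> = (T - t0) * (\<integral>s. (KL_remainder (Suc n) s \<omega>)\<^sup>2 \<partial>Tm t0 T)" for n \<omega>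
  have Q: "integrable M (Q n)" for n
    unfolding Q_def by (intro Bochner_Integration.integrable_mult_right KL_remainder_square_Fubini(2))
  have le: "AE \<omega> in M. (K_trunc t n \<omega> - K t \<omega>)\<^sup>2 \<le> Q n \<omega>" for n
    using K_trunc_minus_K_square_le[OF t] by (simp add: Q_def)
  have int: "integrable M (\<lambda>\<omega>. (K_trunc t n \<omega> - K t \<omega>)\<^sup>2)" for n
    by (rule Bochner_Integration.integrable_bound[OF Q[of n] _ AE_mp[OF le[of n]]])
      (auto intro!: AE_I2 simp: abs_le_iff)
  then show "integrable M (\<lambda>\<omega>. (K_trunc t n \<omega> - K t \<omega>)\<^sup>2)" .
  have "(\<lambda>n. \<integral>(t, \<omega>). (KL_remainder (Suc n) t \<omega>)\<^sup>2 \<partial>(Tm t0 T \<Otimes>\<^sub>M M)) \<longlonglongrightarrow> 0"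
    using LIMSEQ_Suc[OF KL_tendsto] by (simp add: KL_remainder_def)
  then have Q_lim: "(\<lambda>n. \<integral>\<omega>. Q n \<omega> \<partial>M) \<longlonglongrightarrow> 0"
    using tendsto_mult_right_zero[of _ sequentially "T - t0"] KL_remainder_square_Fubini(3)
    by (simp add: Q_def)
  have lower: "0 \<le> (\<integral>\<omega>. (K_trunc t n \<omega> - K t \<omega>)\<^sup>2 \<partial>M)" for n by simp
  have upper: "(\<integral>\<omega>. (K_trunc t n \<omega> - K t \<omega>)\<^sup>2 \<partial>M) \<le> (\<integral>\<omega>. Q n \<omega> \<partial>M)" for n
    by (rule integral_mono_AE[OF int Q le])
  show "(\<lambda>n. \<integral>\<omega>. (K_trunc t n \<omega> - K t \<omega>)\<^sup>2 \<partial>M) \<longlonglongrightarrow> 0"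
    by (rule tendsto_sandwich[OF always_eventually[OF allI[OF lower]]
          always_eventually[OF allI[OF upper]] tendsto_const Q_lim])
qed

lemma K_trunc_exp_square_bounded:
  assumes t: "t0 \<le> t" "t \<le> T"
  obtains C where "\<And>n. integrable M (\<lambda>\<omega>. (exp (- K_trunc t n \<omega>))\<^sup>2)"
    and "\<And>n. (\<integral>\<omega>. (exp (- K_trunc t n \<omega>))\<^sup>2 \<partial>M) \<le> C"
proof (cases "L = 0")
  case True
  \<comment> \<open>(H4) only covers \<open>N \<ge> 1\<close>; without modes \<open>K_trunc\<close> is deterministic\<close>
  then have "K_trunc t n \<omega> = (LINT s:{t0..t}|lborel. mu s)" for n \<omega>
    using K_trunc_eq[OF t] trunc_idx_zero by simp
  then show ?thesis by (intro that[of "(exp (- (LINT s:{t0..t}|lborel. mu s)))\<^sup>2"]) (simp_all add: prob_space)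
next
  case False
  obtain C where C: "\<And>N. 1 \<le> N \<Longrightarrow> enat N \<le> L \<Longrightarrow>
       integrable M (\<lambda>\<omega>. (exp (- Ka mu \<nu> \<phi> t0 N t (xivec \<xi> N \<omega>)))\<^sup>2) \<and>
       sqrt (\<integral>\<omega>. (exp (- Ka mu \<nu> \<phi> t0 N t (xivec \<xi> N \<omega>)))\<^sup>2 \<partial>M) \<le> C"
    using exp_K_trunc_bounded t by auto
  have "integrable M (\<lambda>\<omega>. (exp (- K_trunc t n \<omega>))\<^sup>2)
        \<and> sqrt (\<integral>\<omega>. (exp (- K_trunc t n \<omega>))\<^sup>2 \<partial>M) \<le> C" for n
    using C[of "trunc_idx L n"] trunc_idx_pos[OF False] enat_trunc_idx_le by (simp add: K_trunc_def)
  then show ?thesis using sqrt_le_D by (intro that[of "C\<^sup>2"]) blast+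
qed

definition f0_scaled :: "real \<Rightarrow> real \<Rightarrow> real" where
  "f0_scaled x k = f0 (x * exp (- k)) * exp (- k)"

definition f1 :: "real \<Rightarrow> real \<Rightarrow> real" where
  "f1 x t = (\<integral>\<omega>. f0_scaled x (K t \<omega>) \<partial>M)"

lemma f0_measurable [measurable]: "f0 \<in> borel_measurable borel"
  using distributed_real_measurable[OF _ x0_distributed] f0_nonneg by simp

lemma f0_bound: obtains B where "\<And>y. \<bar>f0 y\<bar> \<le> B"
proof -
  obtain B where "\<And>y. y \<in> Dset M x0 \<Longrightarrow> norm (f0 y) \<le> B"
    using f0_bounded unfolding bounded_iff by auto
  then have "\<bar>f0 y\<bar> \<le> max B 0" for y
    using f0_outside[of y] by (cases "y \<in> Dset M x0") (auto simp: le_max_iff_disj)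
  then show thesis by (rule that)
qed

lemma f0_scaled_bound: "(\<And>y. \<bar>f0 y\<bar> \<le> B) \<Longrightarrow> \<bar>f0_scaled x k\<bar> \<le> B * exp (- k)"
  unfolding f0_scaled_def by (simp add: abs_mult mult_right_mono)

lemma f0_scaled_nonneg: "0 \<le> f0_scaled x k"
  unfolding f0_scaled_def using f0_nonneg by simp

lemma continuous_f0_scaled: "continuous_on UNIV (f0_scaled x)"
  unfolding f0_scaled_def[abs_def]
  by (intro continuous_intros continuous_on_comp_mult_exp[OF Dset_mult_pos_iff f0_continuous f0_outside])

lemma f0_scaled_measurable [measurable]: "f0_scaled x \<in> borel_measurable borel"
  by (rule borel_measurable_continuous_onI[OF continuous_f0_scaled])

lemma f1N_eq_integral_f0_scaled:
  assumes t: "t0 \<le> t" "t \<le> T"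
  shows "f1N f0 (fxi (trunc_idx L n)) mu \<nu> \<phi> t0 (trunc_idx L n) x t = (\<integral>\<omega>. f0_scaled x (K_trunc t n \<omega>) \<partial>M)"
proof -
  define N where "N = trunc_idx L n"
  have N: "enat N \<le> L" unfolding N_def by (rule enat_trunc_idx_le)
  have [measurable]: "(\<lambda>v. v j) \<in> borel_measurable (RN N)" if "j \<in> {..<N}" for j
    unfolding RN_def using measurable_component_singleton[of j "{..<N}" "\<lambda>_. lborel"] that by simp
  have "\<And>j. j < N \<Longrightarrow> integrable (Tm t0 T) (\<phi> j)"
    using integrable_\<phi> N by (meson enat_ord_simps(2) order_less_le_trans)
  then have "(\<lambda>v. f0_scaled x (Ka mu \<nu> \<phi> t0 N t v))
      = (\<lambda>v. f0_scaled x ((LINT s:{t0..t}|lborel. mu s)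
           + (\<Sum>j<N. sqrt (\<nu> j) * (LINT s:{t0..t}|lborel. \<phi> j s) * v j)))"
    by (simp add: Ka_eq_linear[OF t integrable_mu])
  also have "\<dots> \<in> borel_measurable (RN N)" by measurable
  finally have "(\<lambda>v. f0_scaled x (Ka mu \<nu> \<phi> t0 N t v)) \<in> borel_measurable (RN N)" .
  then have "(\<integral>v. fxi N v * f0_scaled x (Ka mu \<nu> \<phi> t0 N t v) \<partial>RN N)
      = (\<integral>\<omega>. f0_scaled x (Ka mu \<nu> \<phi> t0 N t (xivec \<xi> N \<omega>)) \<partial>M)"
    by (rule distributed_integral[OF \<xi>_distributed[OF N] _ fxi_nonneg])
  then show ?thesis
    unfolding f1N_def K_trunc_def f0_scaled_def N_def[symmetric] by (simp add: mult_ac)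
qed

lemma f1N_tendsto_f1:
  assumes t: "t0 \<le> t" "t \<le> T"
  shows "(\<lambda>n. f1N f0 (fxi (trunc_idx L n)) mu \<nu> \<phi> t0 (trunc_idx L n) x t) \<longlonglongrightarrow> f1 x t"
proof -
  obtain B where B: "\<And>y. \<bar>f0 y\<bar> \<le> B" using f0_bound by blast
  obtain C where C: "\<And>n. integrable M (\<lambda>\<omega>. (exp (- K_trunc t n \<omega>))\<^sup>2)"
    "\<And>n. (\<integral>\<omega>. (exp (- K_trunc t n \<omega>))\<^sup>2 \<partial>M) \<le> C"
    using K_trunc_exp_square_bounded[OF t] by blast
  have "(\<lambda>n. \<integral>\<omega>. f0_scaled x (K_trunc t n \<omega>) \<partial>M) \<longlonglongrightarrow> (\<integral>\<omega>. f0_scaled x (K t \<omega>) \<partial>M)"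
    by (rule integral_comp_tendsto_if_L2_tendsto[OF K_trunc_measurable[OF \<xi>_measurable t] K_measurable[OF t]
          K_trunc_L2_tendsto[OF t] C continuous_f0_scaled f0_scaled_bound[OF B]])
  then show ?thesis by (simp add: f1N_eq_integral_f0_scaled[OF t] f1_def)
qed


definition \<xi>_events :: "nat \<Rightarrow> 'a set set" where
  "\<xi>_events N = {xivec \<xi> N -` B \<inter> space M | B. B \<in> sets (RN N)}"

definition F\<xi> :: "'a measure" where
  "F\<xi> = sigma (space M) (\<Union>N\<in>{N. 1 \<le> N \<and> enat N \<le> L}. \<xi>_events N)"

lemma \<xi>_events_subset_events: "enat N \<le> L \<Longrightarrow> \<xi>_events N \<subseteq> events"
  unfolding \<xi>_events_def using measurable_sets[OF distributed_measurable[OF \<xi>_distributed]] by blast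

lemma \<xi>_events_mono:
  assumes "N1 \<le> N2" shows "\<xi>_events N1 \<subseteq> \<xi>_events N2"
proof
  fix b assume "b \<in> \<xi>_events N1"
  then obtain B where B: "B \<in> sets (RN N1)" "b = xivec \<xi> N1 -` B \<inter> space M"
    unfolding \<xi>_events_def by blast
  define B' where "B' = (\<lambda>v. restrict v {..<N1}) -` B \<inter> space (RN N2)"
  have "B' \<in> sets (RN N2)"
    unfolding B'_def RN_def
    using measurable_sets[OF measurable_restrict_subset[of "{..<N1}" "{..<N2}" "\<lambda>_. lborel"]] B(1) assms
    by (simp add: RN_def)
  moreover have "restrict (xivec \<xi> N2 \<omega>) {..<N1} = xivec \<xi> N1 \<omega>" for \<omega>
    using assms by (auto simp: xivec_def fun_eq_iff)
  then have "b = xivec \<xi> N2 -` B' \<inter> space M"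
    unfolding B(2) B'_def by (auto simp: RN_def space_PiM xivec_def)
  ultimately show "b \<in> \<xi>_events N2" unfolding \<xi>_events_def by blast
qed

lemma Int_stable_\<xi>_events: "Int_stable (\<xi>_events N)"
proof (rule Int_stableI)
  fix b1 b2 assume "b1 \<in> \<xi>_events N" "b2 \<in> \<xi>_events N"
  then obtain B1 B2 where "B1 \<in> sets (RN N)" "B2 \<in> sets (RN N)"
    "b1 \<inter> b2 = xivec \<xi> N -` (B1 \<inter> B2) \<inter> space M"
    unfolding \<xi>_events_def by blast
  then show "b1 \<inter> b2 \<in> \<xi>_events N" unfolding \<xi>_events_def by blast
qed

lemma space_F\<xi>: "space F\<xi> = space M"
  and sets_F\<xi>: "sets F\<xi> = sigma_sets (space M) (\<Union>N\<in>{N. 1 \<le> N \<and> enat N \<le> L}. \<xi>_events N)"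
  using \<xi>_events_subset_events sets.sets_into_space unfolding F\<xi>_def
  by (subst space_measure_of sets_measure_of; blast)+

lemma subalgebra_F\<xi>: "subalgebra M F\<xi>"
  unfolding subalgebra_def space_F\<xi> sets_F\<xi>
  using \<xi>_events_subset_events by (intro conjI sets.sigma_sets_subset) auto

lemma \<xi>_measurable_F\<xi>: "enat j < L \<Longrightarrow> \<xi> j \<in> borel_measurable F\<xi>"
proof -
  assume j: "enat j < L"
  then have N: "1 \<le> Suc j" "enat (Suc j) \<le> L" by (auto simp: Suc_ile_eq)
  have "xivec \<xi> (Suc j) \<in> measurable F\<xi> (RN (Suc j))"
  proof (rule measurableI)
    fix B assume "B \<in> sets (RN (Suc j))"
    then have "xivec \<xi> (Suc j) -` B \<inter> space M \<in> \<xi>_events (Suc j)" unfolding \<xi>_events_def by blast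
    then show "xivec \<xi> (Suc j) -` B \<inter> space F\<xi> \<in> sets F\<xi>"
      using N unfolding space_F\<xi> sets_F\<xi> by blast
  qed (simp add: RN_def space_PiM xivec_def)
  moreover have "(\<lambda>v. v j) \<in> borel_measurable (RN (Suc j))"
    unfolding RN_def using measurable_component_singleton[of j "{..<Suc j}" "\<lambda>_. lborel"] by simp
  ultimately have "(\<lambda>\<omega>. xivec \<xi> (Suc j) \<omega> j) \<in> borel_measurable F\<xi>"
    by (rule measurable_compose)
  then show ?thesis by (simp add: xivec_def)
qed

lemma indep_var_x0_if_measurable_F\<xi>:
  assumes K': "K' \<in> borel_measurable F\<xi>"
  shows "indep_var borel x0 borel K'"
proof -
  have x0_events: "{x0 -` A \<inter> space M | A. A \<in> sets borel} \<subseteq> events"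
    using measurable_sets[OF distributed_measurable[OF x0_distributed]] by auto
  have "indep_set (sigma_sets (space M) {x0 -` A \<inter> space M | A. A \<in> sets borel})
      (sigma_sets (space M) (\<Union>N\<in>{N. 1 \<le> N \<and> enat N \<le> L}. \<xi>_events N))"
  proof (rule indep_set_sigma_sets_directed_Union[OF Int_stable_vimage_borel x0_events
        Int_stable_\<xi>_events \<xi>_events_subset_events])
    show "indep_set {x0 -` A \<inter> space M | A. A \<in> sets borel} (\<xi>_events N)"
      if "N \<in> {N. 1 \<le> N \<and> enat N \<le> L}" for N
      using x0_\<xi>_indep that unfolding \<xi>_events_def by blast
    show "\<exists>k\<in>{N. 1 \<le> N \<and> enat N \<le> L}. \<xi>_events i \<subseteq> \<xi>_events k \<and> \<xi>_events j \<subseteq> \<xi>_events k"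
      if "i \<in> {N. 1 \<le> N \<and> enat N \<le> L}" "j \<in> {N. 1 \<le> N \<and> enat N \<le> L}" for i j
      using that \<xi>_events_mono[of i "max i j"] \<xi>_events_mono[of j "max i j"]
      by (intro bexI[of _ "max i j"]) (auto simp: max_def)
  qed auto
  moreover have sub: "{K' -` A \<inter> space M | A. A \<in> sets borel}
      \<subseteq> sigma_sets (space M) (\<Union>N\<in>{N. 1 \<le> N \<and> enat N \<le> L}. \<xi>_events N)"
    using measurable_sets[OF K'] space_F\<xi> sets_F\<xi> by auto
  ultimately have "indep_set (sigma_sets (space M) {x0 -` A \<inter> space M | A. A \<in> sets borel})
      (sigma_sets (space M) {K' -` A \<inter> space M | A. A \<in> sets borel})"
    unfolding indep_set_def
    using sigma_sets_mono[OF sub] by (elim indep_sets_mono_sets) (auto split: bool.split)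
  then show ?thesis
    using measurable_from_subalg[OF subalgebra_F\<xi> K'] distributed_measurable[OF x0_distributed]
    by (simp add: indep_var_eq)
qed


lemma K_AE_subseq_limit:
  assumes t: "t0 \<le> t" "t \<le> T"
  obtains r where "AE \<omega> in M. (\<lambda>n. K_trunc t (r n) \<omega>) \<longlonglongrightarrow> K t \<omega>"
  using AE_tendsto_subseq_if_L2_tendsto[OF K_trunc_measurable[OF \<xi>_measurable t] K_measurable[OF t]
      K_trunc_L2_tendsto[OF t]] by blast

lemma K_AE_eq_measurable_F\<xi>:
  assumes t: "t0 \<le> t" "t \<le> T"
  obtains K' where "K' \<in> borel_measurable F\<xi>" "AE \<omega> in M. K' \<omega> = K t \<omega>"
proof -
  obtain r where r: "AE \<omega> in M. (\<lambda>n. K_trunc t (r n) \<omega>) \<longlonglongrightarrow> K t \<omega>"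
    using K_AE_subseq_limit[OF t] .
  define K' where "K' \<omega> = lim (\<lambda>n. K_trunc t (r n) \<omega>)" for \<omega>
  have "K' \<in> borel_measurable F\<xi>"
    unfolding K'_def by (intro borel_measurable_lim_metric K_trunc_measurable[OF \<xi>_measurable_F\<xi> t])
  moreover have "AE \<omega> in M. K' \<omega> = K t \<omega>"
    using r by eventually_elim (simp add: K'_def limI)
  ultimately show thesis by (rule that)
qed

lemma integrable_exp_K_square:
  assumes t: "t0 \<le> t" "t \<le> T"
  shows "integrable M (\<lambda>\<omega>. (exp (- K t \<omega>))\<^sup>2)"
proof -
  have [measurable]: "K_trunc t n \<in> borel_measurable M" "K t \<in> borel_measurable M" for n
    using K_trunc_measurable[OF \<xi>_measurable t] K_measurable[OF t] by auto
  obtain r where r: "AE \<omega> in M. (\<lambda>n. K_trunc t (r n) \<omega>) \<longlonglongrightarrow> K t \<omega>"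
    using K_AE_subseq_limit[OF t] .
  obtain C where C: "\<And>n. integrable M (\<lambda>\<omega>. (exp (- K_trunc t n \<omega>))\<^sup>2)"
    "\<And>n. (\<integral>\<omega>. (exp (- K_trunc t n \<omega>))\<^sup>2 \<partial>M) \<le> C"
    using K_trunc_exp_square_bounded[OF t] by blast
  show ?thesis
  proof (rule integrable_AE_limit_if_integral_bounded(1)[where F="\<lambda>n \<omega>. (exp (- K_trunc t (r n) \<omega>))\<^sup>2"])
    show "AE \<omega> in M. (\<lambda>n. (exp (- K_trunc t (r n) \<omega>))\<^sup>2) \<longlonglongrightarrow> (exp (- K t \<omega>))\<^sup>2"
      using r by eventually_elim (intro tendsto_intros)
    show "(\<integral>\<omega>. (exp (- K_trunc t (r n) \<omega>))\<^sup>2 \<partial>M) \<le> C" for n by (rule C(2))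
  qed (simp_all add: C(1))
qed

lemma distributed_x0_exp_K:
  assumes t: "t0 \<le> t" "t \<le> T"
  shows "distributed M lborel (\<lambda>\<omega>. x0 \<omega> * exp (K t \<omega>)) (\<lambda>y. ennreal (f1 y t))"
proof -
  \<comment> \<open>\<open>K t\<close> is only a.e. determined by the modes \<open>\<xi>\<close>; pass to a version measurable in \<open>F\<xi>\<close>\<close>
  obtain K' where K': "K' \<in> borel_measurable F\<xi>" and K'_eq: "AE \<omega> in M. K' \<omega> = K t \<omega>"
    using K_AE_eq_measurable_F\<xi>[OF t] .
  have [measurable]: "K' \<in> borel_measurable M" "K t \<in> borel_measurable M" "x0 \<in> borel_measurable M"
    using measurable_from_subalg[OF subalgebra_F\<xi> K'] K_measurable[OF t]
      distributed_measurable[OF x0_distributed] by auto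
  obtain B where B: "\<And>y. \<bar>f0 y\<bar> \<le> B" using f0_bound by blast
  have density_eq: "(\<integral>\<^sup>+ \<omega>. ennreal (f0_scaled y (K' \<omega>)) \<partial>M) = ennreal (f1 y t)" for y
  proof -
    have "integrable M (\<lambda>\<omega>. f0_scaled y (K t \<omega>))"
      by (rule integrable_comp_if_exp_bounded[OF _ _ integrable_exp_K_square[OF t] f0_scaled_bound[OF B]])
        simp_all
    then have "(\<integral>\<^sup>+ \<omega>. ennreal (f0_scaled y (K t \<omega>)) \<partial>M) = ennreal (f1 y t)"
      unfolding f1_def by (rule nn_integral_eq_integral) (simp add: f0_scaled_nonneg)
    then show ?thesis using K'_eq by (subst nn_integral_cong_AE) auto
  qed
  have "distributed M lborel (\<lambda>\<omega>. x0 \<omega> * exp (K' \<omega>)) (\<lambda>y. ennreal (f1 y t))"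
    using distributed_mult_exp_if_indep_var[OF x0_distributed f0_nonneg _ indep_var_x0_if_measurable_F\<xi>[OF K']]
    by (simp add: f0_scaled_def[symmetric] density_eq)
  moreover have "distr M lborel (\<lambda>\<omega>. x0 \<omega> * exp (K' \<omega>)) = distr M lborel (\<lambda>\<omega>. x0 \<omega> * exp (K t \<omega>))"
    using K'_eq by (intro distr_cong_AE) auto
  ultimately show ?thesis by (simp add: distributed_def)
qed

end

theorem theorem7:
  fixes M :: "'a measure" and t0 T :: real and x0 :: "'a \<Rightarrow> real"
    and a :: "real \<Rightarrow> 'a \<Rightarrow> real"
    and L :: enat and \<nu> :: "nat \<Rightarrow> real" and \<phi> :: "nat \<Rightarrow> real \<Rightarrow> real"
    and \<xi> :: "nat \<Rightarrow> 'a \<Rightarrow> real"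
    and f0 :: "real \<Rightarrow> real" and fxi :: "nat \<Rightarrow> (nat \<Rightarrow> real) \<Rightarrow> real"
  assumes prob: "prob_space M" and compl: "complete_measure M"
    and tT: "t0 < T"
    \<comment> \<open>(H1)\<close>
    and H1: "sqint (Tm t0 T \<Otimes>\<^sub>M M) (\<lambda>(t, \<omega>). a t \<omega>)"
    \<comment> \<open>Karhunen-Loeve data: the nonzero eigenpairs, indexed by j < L\<close>
    and KL_eig: "\<And>j. enat j < L \<Longrightarrow> sqint (Tm t0 T) (\<phi> j) \<and> 0 < \<nu> j \<and>
                    (AE t in Tm t0 T. cov_op M a t0 T (\<phi> j) t = \<nu> j * \<phi> j t)"
    and KL_orth: "\<And>i j. enat i < L \<Longrightarrow> enat j < L \<Longrightarrow>
                    integral\<^sup>L (Tm t0 T) (\<lambda>t. \<phi> i t * \<phi> j t) = (if i = j then 1 else 0)"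
    and KL_compl: "\<And>f. sqint (Tm t0 T) f \<Longrightarrow>
                    (\<forall>j. enat j < L \<longrightarrow> integral\<^sup>L (Tm t0 T) (\<lambda>t. f t * \<phi> j t) = 0) \<Longrightarrow>
                    (AE t in Tm t0 T. cov_op M a t0 T f t = 0)"
    and KL_xi: "\<And>j. enat j < L \<Longrightarrow> sqint M (\<xi> j) \<and> integral\<^sup>L M (\<xi> j) = 0 \<and>
                    integral\<^sup>L M (\<lambda>\<omega>. (\<xi> j \<omega>)^2) = 1"
    and KL_uncorr: "\<And>i j. enat i < L \<Longrightarrow> enat j < L \<Longrightarrow> i \<noteq> j \<Longrightarrow>
                    integral\<^sup>L M (\<lambda>\<omega>. \<xi> i \<omega> * \<xi> j \<omega>) = 0"
    and KL_conv: "(\<lambda>n. integral\<^sup>L (Tm t0 T \<Otimes>\<^sub>M M)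
                    (\<lambda>(t, \<omega>). (a t \<omega> - mean_fun M a t
                       - (\<Sum>j\<in>{j. j < n \<and> enat j < L}. sqrt (\<nu> j) * \<phi> j t * \<xi> j \<omega>))^2))
                  \<longlonglongrightarrow> 0"
    \<comment> \<open>(H2): absolute continuity (via densities) and independence\<close>
    and f0_dens: "distributed M lborel x0 (\<lambda>y. ennreal (f0 y))"
    and f0_nonneg: "\<And>y. 0 \<le> f0 y"
    and f0_out: "\<And>y. y \<notin> Dset M x0 \<Longrightarrow> f0 y = 0"
    and fxi_dens: "\<And>N. enat N \<le> L \<Longrightarrow>
                    distributed M (RN N) (xivec \<xi> N) (\<lambda>v. ennreal (fxi N v))"
    and fxi_nonneg: "\<And>N v. 0 \<le> fxi N v"
    and H2_indep: "\<And>N. 1 \<le> N \<Longrightarrow> enat N \<le> L \<Longrightarrow>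
                    prob_space.indep_set M {x0 -` A \<inter> space M | A. A \<in> sets borel}
                      {xivec \<xi> N -` B \<inter> space M | B. B \<in> sets (RN N)}"
    \<comment> \<open>(H3)\<close>
    and H3: "continuous_on (Dset M x0) f0" "bounded (f0 ` Dset M x0)"
    \<comment> \<open>(H4)\<close>
    and H4: "\<exists>C. \<forall>N t. 1 \<le> N \<longrightarrow> enat N \<le> L \<longrightarrow> t \<in> {t0..T} \<longrightarrow>
               integrable M (\<lambda>\<omega>. (exp (- Ka (mean_fun M a) \<nu> \<phi> t0 N t (xivec \<xi> N \<omega>)))^2) \<and>
               sqrt (integral\<^sup>L M (\<lambda>\<omega>. (exp (- Ka (mean_fun M a) \<nu> \<phi> t0 N t (xivec \<xi> N \<omega>)))^2)) \<le> C"
  shows "\<exists>f1 :: real \<Rightarrow> real \<Rightarrow> real.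
           (\<forall>t\<in>{t0..T}. distributed M lborel
               (\<lambda>\<omega>. x0 \<omega> * exp (LINT s:{t0..t}|lborel. a s \<omega>)) (\<lambda>y. ennreal (f1 y t))) \<and>
           (\<forall>x. \<forall>t\<in>{t0..T}.
               (\<lambda>n. f1N f0 (fxi (trunc_idx L n)) (mean_fun M a) \<nu> \<phi> t0 (trunc_idx L n) x t)
                 \<longlonglongrightarrow> f1 x t)"
proof -
  interpret random_growth_model M t0 T x0 a L \<nu> \<phi> \<xi> f0 fxi
    using prob tT H1 KL_eig KL_xi KL_conv f0_dens f0_nonneg f0_out fxi_dens fxi_nonneg H2_indep H3 H4
    unfolding random_growth_model_def random_growth_model_axioms_def by blast
  show ?thesis
    using distributed_x0_exp_K f1N_tendsto_f1 unfolding K_def by (intro exI[of _ f1]) auto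
qed


end
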